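(* Let $k\ge 2$ and let $G$ be the complete $k$-partite graph $K(4,2,\ldots,2)$ (one part of size $4$ and $k-1$ parts of size $2$). Then $h(G)=k$ if $k$ is odd and $h(G)=k+1$ if $k$ is even.
   Context: All graphs are finite and simple. A list assignment $L$ to a graph $G$ assigns a finite set $L(v)$ to each vertex $v$; a proper $L$-coloring is a map $\psi$ with $\psi(v)\in L(v)$ for all $v$ and $\psi(u)\ne\psi(v)$ for every edge $uv$. For a subgraph $H$ of $G$ and a color $\sigma$, let $H_\sigma$ denote the subgraph of $H$ induced by $\{v\in V(H):\sigma\in L(v)\}$, and let $\alpha$ denote the independence number (with $\alpha$ of the null graph equal to $0$). $G$ and $L$ satisfy Hall's condition if $\sum_{\sigma}\alpha(H_\sigma)\ge |V(H)|$ for every subgraph $H$ of $G$, the sum being over all colors. The Hall number $h(G)$ is the smallest positive integer $k$ such that $G$ has a proper $L$-coloring whenever $G$ and $L$ satisfy Hall's condition and $|L(v)|\ge k$ for every $v\in V(G)$. *)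

theory Defs
  imports Main
begin

text \<open>A graph is given by a finite vertex set V and a symmetric irreflexive
  edge relation E (only edges between vertices of V matter).\<close>

definition independent_set :: "'v set \<Rightarrow> ('v \<Rightarrow> 'v \<Rightarrow> bool) \<Rightarrow> bool" where
  "independent_set S E \<longleftrightarrow> (\<forall>u\<in>S. \<forall>v\<in>S. \<not> E u v)"

text \<open>Independence number; equals 0 for the null graph (V empty).\<close>
definition indep_number :: "'v set \<Rightarrow> ('v \<Rightarrow> 'v \<Rightarrow> bool) \<Rightarrow> nat" where
  "indep_number V E = Max (card ` {S. S \<subseteq> V \<and> independent_set S E})"

definition is_subgraph ::
  "'v set \<Rightarrow> ('v \<Rightarrow> 'v \<Rightarrow> bool) \<Rightarrow> 'v set \<Rightarrow> ('v \<Rightarrow> 'v \<Rightarrow> bool) \<Rightarrow> bool" where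
  "is_subgraph W F V E \<longleftrightarrow> W \<subseteq> V \<and>
     (\<forall>u v. F u v \<longrightarrow> u \<in> W \<and> v \<in> W \<and> E u v) \<and> (\<forall>u v. F u v \<longrightarrow> F v u)"

text \<open>Colours not in any list of W
  contribute alpha(null graph) = 0, so the sum is taken over the colours
  occurring in lists of W.\<close>
definition hall_condition ::
  "'v set \<Rightarrow> ('v \<Rightarrow> 'v \<Rightarrow> bool) \<Rightarrow> ('v \<Rightarrow> 'c set) \<Rightarrow> bool" where
  "hall_condition V E L \<longleftrightarrow>
     (\<forall>W F. is_subgraph W F V E \<longrightarrow>
        card W \<le> (\<Sum>\<sigma>\<in>\<Union> (L ` W). indep_number {v\<in>W. \<sigma> \<in> L v} F))"

definition proper_L_coloring ::
  "'v set \<Rightarrow> ('v \<Rightarrow> 'v \<Rightarrow> bool) \<Rightarrow> ('v \<Rightarrow> 'c set) \<Rightarrow> ('v \<Rightarrow> 'c) \<Rightarrow> bool" where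
  "proper_L_coloring V E L \<psi> \<longleftrightarrow>
     (\<forall>v\<in>V. \<psi> v \<in> L v) \<and> (\<forall>u\<in>V. \<forall>v\<in>V. E u v \<longrightarrow> \<psi> u \<noteq> \<psi> v)"

text \<open>Colours are taken to be natural numbers (no loss of generality, as lists are finite).\<close>
definition hall_number :: "'v set \<Rightarrow> ('v \<Rightarrow> 'v \<Rightarrow> bool) \<Rightarrow> nat" where
  "hall_number V E = (LEAST k. 0 < k \<and>
     (\<forall>L :: 'v \<Rightarrow> nat set.
        (\<forall>v\<in>V. finite (L v) \<and> k \<le> card (L v)) \<and> hall_condition V E L
        \<longrightarrow> (\<exists>\<psi>. proper_L_coloring V E L \<psi>)))"

definition K422_V :: "nat \<Rightarrow> (nat \<times> nat) set" where
  "K422_V k = {(i, j). i < k \<and> j < (if i = 0 then 4 else 2)}"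

definition K422_E :: "nat \<times> nat \<Rightarrow> nat \<times> nat \<Rightarrow> bool" where
  "K422_E x y \<longleftrightarrow> fst x \<noteq> fst y"

end

theory Submission
  imports Defs
begin

(*
  With lists of size k + 1, two vertices of one part whose lists meet are
  coloured alike; once this is impossible Hall's marriage theorem finishes the colouring,
  because K(4,2,...,2) has k + 1 = sum of ceil(|V_i| / 2) over its parts V_i.

  For odd k = 2m + 1 and lists of size k, two pair parts that have distinct colours common to
  both of their vertices are coloured with these colours and removed, an induction on m. If
  there are no such parts, at most one colour e is common within a pair part. If e lies in all
  lists of the big part, the big part gets e and the pair parts are coloured as in the first
  paragraph; otherwise the part sharing e gets e and in the rest the two vertices of every
  pair part have disjoint lists. In that situation the big part is coloured from at most two
  colours meeting all four of its lists, chosen according to how these lists intersect, and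
  the pair vertices by distinct colours avoiding them. The only obstruction to Hall's
  condition there are "tight" transversals of the pair parts, all of whose lists coincide;
  when they cannot be dodged directly, counting the pairs of colours missed by the big-part
  lists yields two suitable colours; this count is where the parity of k enters.

  For the lower bound, lists of size 2m are built from two blocks X, Y of 2m colours: the
  first vertices of the pair parts 1, ..., 2m - 1 take X, the second ones Y, so each block has
  exactly one colour left for the big part, whose four lists combine a half of X with a half
  of Y; one of them misses both leftover colours. Hall's condition holds because the colours
  can be charged to parts so that every vertex but one gets a colour of its list charged to
  its own part, and one vertex gets two.
*)

section \<open>Hall's marriage theorem\<close>

lemma exists_sdr_Un:
  assumes "inj_on f J" "\<forall>i\<in>J. f i \<in> X i" "inj_on g K" "\<forall>i\<in>K. g i \<in> X i - f ` J"
  shows "\<exists>h. inj_on h (J \<union> K) \<and> (\<forall>i\<in>J \<union> K. h i \<in> X i)"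
proof (intro exI conjI)
  define h where "h i = (if i \<in> J then f i else g i)" for i
  show "\<forall>i\<in>J \<union> K. h i \<in> X i" using assms(2,4) unfolding h_def by auto
  show "inj_on h (J \<union> K)"
  proof (rule inj_onI)
    fix a b assume "a \<in> J \<union> K" "b \<in> J \<union> K" and eq: "h a = h b"
    then consider "a \<in> J" "b \<in> J" | "a \<in> J" "b \<in> K - J" | "a \<in> K - J" "b \<in> J"
      | "a \<in> K - J" "b \<in> K - J"
      by blast
    then show "a = b"
    proof cases
      case 1 then show ?thesis using eq assms(1) unfolding h_def by (simp add: inj_on_def)
    next
      case 2 then show ?thesis using eq assms(4) unfolding h_def by (metis DiffD2 DiffE imageI)
    next
      case 3 then show ?thesis using eq assms(4) unfolding h_def by (metis DiffD2 DiffE imageI)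
    next
      case 4 then show ?thesis using eq assms(3) unfolding h_def by (simp add: inj_on_def)
    qed
  qed
qed

lemma Hall_condition_remove_element:
  assumes "finite I" "i0 \<in> I" "\<forall>i\<in>I. finite (X i)"
    and surplus: "\<forall>J. J \<noteq> {} \<and> J \<subset> I \<longrightarrow> card J < card (\<Union> (X ` J))"
  shows "\<forall>J\<subseteq>I - {i0}. card J \<le> card (\<Union> ((\<lambda>i. X i - {x0}) ` J))"
proof (intro allI impI)
  fix J assume J: "J \<subseteq> I - {i0}"
  show "card J \<le> card (\<Union> ((\<lambda>i. X i - {x0}) ` J))"
  proof (cases "J = {}")
    case False
    have "J \<subset> I" using J assms(2) by auto
    with False surplus have "card J < card (\<Union> (X ` J))" by blast
    moreover have "finite (\<Union> (X ` J))"
      using \<open>J \<subset> I\<close> assms(1,3) by (metis finite_UN_I psubset_imp_subset rev_finite_subset subsetD)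
    moreover have "\<Union> ((\<lambda>i. X i - {x0}) ` J) = \<Union> (X ` J) - {x0}" by auto
    moreover have "card (\<Union> (X ` J)) - 1 \<le> card (\<Union> (X ` J) - {x0})"
      by (simp add: card_Diff_singleton_if)
    ultimately show ?thesis by simp
  qed simp
qed

lemma Hall_condition_remove_critical:
  assumes "finite I" "J \<subseteq> I" "\<forall>i\<in>I. finite (X i)"
    and Hall: "\<forall>J\<subseteq>I. card J \<le> card (\<Union> (X ` J))"
    and critical: "card J = card (\<Union> (X ` J))"
  shows "\<forall>K\<subseteq>I - J. card K \<le> card (\<Union> ((\<lambda>i. X i - \<Union> (X ` J)) ` K))"
proof (intro allI impI)
  fix K assume K: "K \<subseteq> I - J"
  have "finite J" "finite K" using K assms(1,2) finite_subset by blast+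
  moreover have "\<forall>i\<in>J. finite (X i)" "\<forall>i\<in>K. finite (X i)" using K assms(2,3) by auto
  ultimately have fin: "finite J" "finite K" "finite (\<Union> (X ` J))"
    "finite (\<Union> ((\<lambda>i. X i - \<Union> (X ` J)) ` K))"
    by auto
  have "card K + card J = card (K \<union> J)"
    using K fin by (subst card_Un_disjoint) auto
  also have "\<dots> \<le> card (\<Union> (X ` (K \<union> J)))"
  proof -
    have "K \<union> J \<subseteq> I" using K assms(2) by blast
    then show ?thesis using Hall by blast
  qed
  also have "\<Union> (X ` (K \<union> J)) = \<Union> ((\<lambda>i. X i - \<Union> (X ` J)) ` K) \<union> \<Union> (X ` J)" by auto
  also have "card \<dots> = card (\<Union> ((\<lambda>i. X i - \<Union> (X ` J)) ` K)) + card J"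
    using fin critical by (subst card_Un_disjoint) auto
  finally show "card K \<le> card (\<Union> ((\<lambda>i. X i - \<Union> (X ` J)) ` K))" by simp
qed

theorem Hall_marriage:
  assumes "finite I" "\<forall>i\<in>I. finite (X i)" "\<forall>J\<subseteq>I. card J \<le> card (\<Union> (X ` J))"
  shows "\<exists>f. inj_on f I \<and> (\<forall>i\<in>I. f i \<in> X i)"
  using assms
proof (induction "card I" arbitrary: I X rule: less_induct)
  case less
  show ?case
  proof (cases "\<forall>J. J \<noteq> {} \<and> J \<subset> I \<longrightarrow> card J < card (\<Union> (X ` J))")
    case surplus: True
    show ?thesis
    proof (cases "I = {}")
      case False
      then obtain i0 where i0: "i0 \<in> I" by blast
      have "card {i0} \<le> card (\<Union> (X ` {i0}))" using less.prems(3) i0 by blast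
      then have "X i0 \<noteq> {}" by auto
      then obtain x0 where x0: "x0 \<in> X i0" by blast
      have "card (I - {i0}) < card I" using less.prems(1) i0 by (rule card_Diff1_less)
      then obtain f where f: "inj_on f (I - {i0})" "\<forall>i\<in>I - {i0}. f i \<in> X i - {x0}"
        using less.hyps[of "I - {i0}" "\<lambda>i. X i - {x0}"] less.prems
          Hall_condition_remove_element[OF less.prems(1) i0 less.prems(2) surplus] by auto
      then have "\<exists>h. inj_on h ({i0} \<union> (I - {i0})) \<and> (\<forall>i\<in>{i0} \<union> (I - {i0}). h i \<in> X i)"
        using x0 by (intro exists_sdr_Un[where f = "\<lambda>_. x0"]) auto
      moreover have "{i0} \<union> (I - {i0}) = I" using i0 by auto
      ultimately show ?thesis by metis
    qed simp
  next
    case False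
    then obtain J where J: "J \<noteq> {}" "J \<subset> I" "card (\<Union> (X ` J)) \<le> card J"
      using not_less by blast
    have critical: "card J = card (\<Union> (X ` J))"
      using J less.prems(3) by (meson le_antisym psubset_imp_subset)
    have "finite J" using J(2) less.prems(1) finite_subset by auto
    have "card J < card I" using less.prems(1) J(2) by (rule psubset_card_mono)
    then obtain f1 where f1: "inj_on f1 J" "\<forall>i\<in>J. f1 i \<in> X i"
      using less.hyps[of J X] \<open>finite J\<close> J(2) less.prems(2,3) by auto
    have "card (I - J) = card I - card J"
      using \<open>finite J\<close> J(2) by (simp add: card_Diff_subset psubset_imp_subset)
    moreover have "0 < card J" using J(1) \<open>finite J\<close> by auto
    ultimately have "card (I - J) < card I" using \<open>card J < card I\<close> by linarith
    then obtain f2 where f2: "inj_on f2 (I - J)" "\<forall>i\<in>I - J. f2 i \<in> X i - \<Union> (X ` J)"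
      using less.hyps[of "I - J" "\<lambda>i. X i - \<Union> (X ` J)"] less.prems(1,2)
        Hall_condition_remove_critical[OF less.prems(1) psubset_imp_subset[OF J(2)] less.prems(2,3)
          critical]
      by auto
    have "f1 ` J \<subseteq> \<Union> (X ` J)" using f1(2) by blast
    then have "\<forall>i\<in>I - J. f2 i \<in> X i - f1 ` J" using f2(2) by auto
    then have "\<exists>h. inj_on h (J \<union> (I - J)) \<and> (\<forall>i\<in>J \<union> (I - J). h i \<in> X i)"
      by (rule exists_sdr_Un[OF f1 f2(1)])
    moreover have "J \<union> (I - J) = I" using J(2) by auto
    ultimately show ?thesis by metis
  qed
qed

section \<open>List colourings of complete multipartite graphs\<close>

(* Proper L-colourings of the complete multipartite graph on V whose parts are the fibres of p. *)
definition colorable :: "'v set \<Rightarrow> ('v \<Rightarrow> 'p) \<Rightarrow> ('v \<Rightarrow> 'c set) \<Rightarrow> bool" where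
  "colorable V p L \<longleftrightarrow>
     (\<exists>\<psi>. (\<forall>v\<in>V. \<psi> v \<in> L v) \<and> (\<forall>u\<in>V. \<forall>v\<in>V. p u \<noteq> p v \<longrightarrow> \<psi> u \<noteq> \<psi> v))"

lemma colorable_if_inj_on:
  assumes "inj_on f V" "\<forall>v\<in>V. f v \<in> L v"
  shows "colorable V p L"
  unfolding colorable_def
proof (intro exI conjI)
  show "\<forall>u\<in>V. \<forall>v\<in>V. p u \<noteq> p v \<longrightarrow> f u \<noteq> f v" using inj_onD[OF assms(1)] by blast
qed (use assms(2) in blast)

lemma colorable_if_Hall:
  assumes "finite V" "\<forall>v\<in>V. finite (L v)" "\<And>J. J \<subseteq> V \<Longrightarrow> card J \<le> card (\<Union> (L ` J))"
  shows "colorable V p L"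
proof -
  obtain f where "inj_on f V" "\<forall>v\<in>V. f v \<in> L v" using Hall_marriage[of V L] assms by blast
  then show ?thesis by (rule colorable_if_inj_on)
qed

lemma colorable_extend:
  assumes "colorable V' p (\<lambda>v. L v - C)" "V' \<subseteq> V"
    and "\<forall>v\<in>V - V'. g v \<in> L v \<inter> C" "\<forall>u\<in>V - V'. \<forall>w\<in>V - V'. p u \<noteq> p w \<longrightarrow> g u \<noteq> g w"
  shows "colorable V p L"
proof -
  obtain \<psi> where \<psi>: "\<forall>v\<in>V'. \<psi> v \<in> L v - C" "\<forall>u\<in>V'. \<forall>v\<in>V'. p u \<noteq> p v \<longrightarrow> \<psi> u \<noteq> \<psi> v"
    using assms(1) unfolding colorable_def by blast
  define \<phi> where "\<phi> v = (if v \<in> V' then \<psi> v else g v)" for v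
  have "\<phi> u \<noteq> \<phi> w" if "u \<in> V" "w \<in> V" "p u \<noteq> p w" for u w
  proof (cases "u \<in> V'"; cases "w \<in> V'")
    assume "u \<in> V'" "w \<notin> V'"
    then show ?thesis using that \<psi>(1) assms(3) unfolding \<phi>_def by auto
  next
    assume "u \<notin> V'" "w \<in> V'"
    then have "g u \<in> C" "\<psi> w \<notin> C" using that \<psi>(1) assms(3) by auto
    then show ?thesis using \<open>u \<notin> V'\<close> \<open>w \<in> V'\<close> unfolding \<phi>_def by auto
  qed (use that \<psi>(2) assms(4) in \<open>auto simp: \<phi>_def\<close>)
  moreover have "\<phi> v \<in> L v" if "v \<in> V" for v
    using that \<psi>(1) assms(3) unfolding \<phi>_def by auto
  ultimately show ?thesis unfolding colorable_def by blast
qed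

lemma colorable_extend_one_color:
  assumes "colorable V' p (\<lambda>v. L v - {c})" "V' \<subseteq> V"
    and "\<forall>v\<in>V - V'. c \<in> L v" "\<forall>u\<in>V - V'. \<forall>w\<in>V - V'. p u = p w"
  shows "colorable V p L"
  by (rule colorable_extend[where C = "{c}" and g = "\<lambda>_. c"]) (use assms in auto)

lemma colorable_if_single_part:
  assumes "\<forall>v\<in>V. L v \<noteq> {}" "\<forall>u\<in>V. \<forall>v\<in>V. p u = p v"
  shows "colorable V p L"
  unfolding colorable_def
proof (intro exI conjI)
  show "\<forall>v\<in>V. (SOME c. c \<in> L v) \<in> L v" using assms(1) by (simp add: some_in_eq)
qed (use assms(2) in blast)

definition sum_ceil_half_parts :: "'v set \<Rightarrow> ('v \<Rightarrow> 'p) \<Rightarrow> nat" where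
  "sum_ceil_half_parts V p = (\<Sum>i\<in>p ` V. (card {v\<in>V. p v = i} + 1) div 2)"

lemma card_image_le_sum_ceil_half_parts:
  assumes "finite V"
  shows "card (p ` V) \<le> sum_ceil_half_parts V p"
proof -
  have "1 \<le> (card {v\<in>V. p v = i} + 1) div 2" if "i \<in> p ` V" for i
  proof -
    have "{v\<in>V. p v = i} \<noteq> {}" using that by auto
    then have "card {v\<in>V. p v = i} \<noteq> 0" using assms by simp
    then show ?thesis by linarith
  qed
  then have "(\<Sum>i\<in>p ` V. 1) \<le> sum_ceil_half_parts V p"
    unfolding sum_ceil_half_parts_def by (intro sum_mono) auto
  then show ?thesis by simp
qed

lemma sum_ceil_half_parts_remove_pair:
  assumes "finite V" "u \<in> V" "v \<in> V" "u \<noteq> v" "p u = p v"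
  shows "sum_ceil_half_parts (V - {u, v}) p + 1 \<le> sum_ceil_half_parts V p"
proof -
  define f where "f W i = (card {w\<in>W. p w = i} + 1) div 2" for W i
  have fin: "finite (p ` V)" using assms(1) by simp
  have i0: "p u \<in> p ` V" using assms(2) by simp
  have other: "f (V - {u, v}) i = f V i" if "i \<noteq> p u" for i
  proof -
    have "{w\<in>V - {u, v}. p w = i} = {w\<in>V. p w = i}" using that assms(5) by auto
    then show ?thesis unfolding f_def by simp
  qed
  have "card {w\<in>V - {u, v}. p w = p u} + 2 = card {w\<in>V. p w = p u}"
  proof -
    have "{w\<in>V - {u, v}. p w = p u} = {w\<in>V. p w = p u} - {u, v}" by auto
    moreover have sub: "{u, v} \<subseteq> {w\<in>V. p w = p u}" using assms(2,3,5) by auto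
    moreover have "finite {w\<in>V. p w = p u}" using assms(1) by simp
    moreover have "card {u, v} = 2" using assms(4) by simp
    ultimately show ?thesis using card_Diff_subset[of "{u, v}"] card_mono[OF _ sub] by simp
  qed
  then have at_u: "f (V - {u, v}) (p u) + 1 = f V (p u)" unfolding f_def by linarith
  have "sum_ceil_half_parts (V - {u, v}) p \<le> (\<Sum>i\<in>p ` V. f (V - {u, v}) i)"
    unfolding sum_ceil_half_parts_def f_def using fin by (intro sum_mono2) auto
  also have "\<dots> = f (V - {u, v}) (p u) + (\<Sum>i\<in>p ` V - {p u}. f V i)"
    using fin i0 other by (simp add: sum.remove)
  also have "\<dots> + 1 = sum_ceil_half_parts V p"
    unfolding sum_ceil_half_parts_def f_def[symmetric] using fin i0 at_u by (simp add: sum.remove)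
  finally show ?thesis by linarith
qed

lemma colorable_if_same_part_lists_disjoint:
  assumes "finite V" "\<forall>v\<in>V. finite (L v) \<and> s \<le> card (L v)"
    and "sum_ceil_half_parts V p \<le> s" "card V \<le> 2 * s"
    and disj: "\<forall>u\<in>V. \<forall>v\<in>V. u \<noteq> v \<longrightarrow> p u = p v \<longrightarrow> L u \<inter> L v = {}"
  shows "colorable V p L"
proof (rule colorable_if_Hall)
  fix J assume J: "J \<subseteq> V"
  have finJ: "finite J" "\<forall>v\<in>J. finite (L v)" using J assms(1,2) finite_subset by auto
  show "card J \<le> card (\<Union> (L ` J))"
  proof (cases "inj_on p J")
    case False
    then obtain u v where uv: "u \<in> J" "v \<in> J" "u \<noteq> v" "p u = p v" unfolding inj_on_def by blast
    have "s \<le> card (L u)" "s \<le> card (L v)" using uv J assms(2) by auto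
    then have "card J \<le> card (L u) + card (L v)" using card_mono[OF assms(1) J] assms(4) by linarith
    also have "\<dots> = card (L u \<union> L v)"
      using uv J disj finJ by (subst card_Un_disjoint) auto
    also have "\<dots> \<le> card (\<Union> (L ` J))" using uv finJ by (intro card_mono) auto
    finally show ?thesis .
  next
    case True
    show ?thesis
    proof (cases "J = {}")
      case False
      then obtain v where v: "v \<in> J" by blast
      have "card J = card (p ` J)" using card_image[OF True] by simp
      also have "\<dots> \<le> card (p ` V)" using J assms(1) by (intro card_mono) auto
      also have "\<dots> \<le> s"
        using card_image_le_sum_ceil_half_parts[OF assms(1), of p] assms(3) by linarith
      also have "\<dots> \<le> card (L v)" using assms(2) v J by auto
      also have "\<dots> \<le> card (\<Union> (L ` J))" using v finJ by (intro card_mono) auto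
      finally show ?thesis .
    qed simp
  qed
qed (use assms in auto)

(* Two vertices of one part with a common colour are coloured alike and removed; once the
   lists within every part are disjoint, Hall's condition holds. *)
theorem colorable_if_sum_ceil_half_parts_le:
  assumes "finite V" "\<forall>v\<in>V. finite (L v) \<and> s \<le> card (L v)"
    and "sum_ceil_half_parts V p \<le> s" "card V \<le> 2 * s"
  shows "colorable V p L"
  using assms
proof (induction "card V" arbitrary: V L s rule: less_induct)
  case less
  show ?case
  proof (cases "\<exists>u\<in>V. \<exists>v\<in>V. u \<noteq> v \<and> p u = p v \<and> L u \<inter> L v \<noteq> {}")
    case True
    then obtain u v c where uv: "u \<in> V" "v \<in> V" "u \<noteq> v" "p u = p v" "c \<in> L u" "c \<in> L v"
      by blast
    have "card {u, v} \<le> card V" using uv less.prems(1) by (intro card_mono) auto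
    then have card_V': "card (V - {u, v}) + 2 = card V"
      using uv less.prems(1) by (simp add: card_Diff_subset)
    have "colorable (V - {u, v}) p (\<lambda>w. L w - {c})"
    proof (rule less.hyps[where s = "s - 1"])
      show "\<forall>w\<in>V - {u, v}. finite (L w - {c}) \<and> s - 1 \<le> card (L w - {c})"
      proof
        fix w assume "w \<in> V - {u, v}"
        then have "finite (L w)" "s \<le> card (L w)" using less.prems(2) by auto
        then show "finite (L w - {c}) \<and> s - 1 \<le> card (L w - {c})"
          using diff_card_le_card_Diff[of "{c}" "L w"] by simp
      qed
      show "sum_ceil_half_parts (V - {u, v}) p \<le> s - 1"
        using sum_ceil_half_parts_remove_pair[OF less.prems(1) uv(1-4)] less.prems(3) by linarith
      show "card (V - {u, v}) \<le> 2 * (s - 1)" using card_V' less.prems(4) by linarith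
    qed (use card_V' less.prems(1) in auto)
    then show ?thesis
      by (rule colorable_extend_one_color) (use uv in auto)
  next
    case False
    then have "\<forall>u\<in>V. \<forall>v\<in>V. u \<noteq> v \<longrightarrow> p u = p v \<longrightarrow> L u \<inter> L v = {}" by blast
    then show ?thesis by (rule colorable_if_same_part_lists_disjoint[OF less.prems])
  qed
qed

section \<open>The upper bound for K(4,2,...,2)\<close>

lemma card_Int_doubleton_le_1:
  assumes "c \<notin> Z \<or> d \<notin> Z"
  shows "card ({c, d} \<inter> Z) \<le> 1"
proof -
  have "{c, d} \<inter> Z \<subseteq> {c} \<or> {c, d} \<inter> Z \<subseteq> {d}" using assms by auto
  then show ?thesis
  proof
    assume "{c, d} \<inter> Z \<subseteq> {c}"
    then show ?thesis using card_mono[of "{c}"] by fastforce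
  next
    assume "{c, d} \<inter> Z \<subseteq> {d}"
    then show ?thesis using card_mono[of "{d}"] by fastforce
  qed
qed

lemma four_mult_le_square: "4 * (u * v) \<le> (u + v) * (u + v)" for u v :: nat
proof -
  have "0 \<le> (int u - int v) * (int u - int v)" by simp
  then have "int (4 * (u * v)) \<le> int ((u + v) * (u + v))" by (simp add: algebra_simps)
  then show ?thesis by (simp only: of_nat_le_iff)
qed

lemma card_missed_pairs:
  assumes "finite Z" "finite Z'" "Z \<inter> Z' = {}" "card Z = s" "card Z' = s"
    and "M \<subseteq> Z \<union> Z'" "s \<le> card M"
  shows "4 * card ((Z - M) \<times> (Z' - M)) \<le> s * s"
    and "odd s \<or> s + 1 \<le> card M \<Longrightarrow> 4 * card ((Z - M) \<times> (Z' - M)) < s * s"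
proof -
  define u v where "u = card (Z - M)" and "v = card (Z' - M)"
  have "u + v = card ((Z - M) \<union> (Z' - M))"
    unfolding u_def v_def using assms(1-3) by (subst card_Un_disjoint) auto
  also have "(Z - M) \<union> (Z' - M) = (Z \<union> Z') - M" by auto
  also have "card \<dots> = 2 * s - card M"
    using assms by (simp add: card_Diff_subset card_Un_disjoint finite_subset)
  finally have "u + v = 2 * s - card M" .
  moreover have "card M \<le> 2 * s"
    using card_mono[OF _ assms(6)] assms(1-5) by (simp add: card_Un_disjoint)
  ultimately have sum_uv: "u + v + card M = 2 * s" by linarith
  then have "u + v \<le> s" using assms(7) by linarith
  have card_pairs: "4 * card ((Z - M) \<times> (Z' - M)) \<le> (u + v) * (u + v)"
    unfolding u_def v_def by (simp add: card_cartesian_product four_mult_le_square)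
  also have "\<dots> \<le> s * s" using \<open>u + v \<le> s\<close> by (intro mult_le_mono)
  finally show le: "4 * card ((Z - M) \<times> (Z' - M)) \<le> s * s" .
  assume "odd s \<or> s + 1 \<le> card M"
  then show "4 * card ((Z - M) \<times> (Z' - M)) < s * s"
  proof
    assume "odd s"
    then have "odd (s * s)" "even (4 * card ((Z - M) \<times> (Z' - M)))" by simp_all
    then have "4 * card ((Z - M) \<times> (Z' - M)) \<noteq> s * s" by metis
    then show ?thesis using le by linarith
  next
    assume "s + 1 \<le> card M"
    then have "(u + v) * (u + v) < s * s"
      using sum_uv mult_strict_mono[of "u + v" s "u + v" s] by linarith
    then show ?thesis using card_pairs by linarith
  qed
qed

(* A set M a misses the pairs in (Z - M a) \<times> (Z' - M a), at most s^2/4 of them and fewer if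
   s is odd or |M a| > s; so at most four such sets, one of them missing fewer, cannot miss all
   s^2 pairs of Z \<times> Z'. *)
lemma exists_pair_meeting_all:
  assumes Z: "finite Z" "finite Z'" "Z \<inter> Z' = {}" "card Z = s" "card Z' = s"
    and F: "finite F" "card F \<le> 4" "\<forall>a\<in>F. M a \<subseteq> Z \<union> Z' \<and> s \<le> card (M a)"
    and strict: "odd s \<or> (\<exists>a\<in>F. s + 1 \<le> card (M a))"
  shows "\<exists>z\<in>Z. \<exists>z'\<in>Z'. \<forall>a\<in>F. z \<in> M a \<or> z' \<in> M a"
proof -
  define missed where "missed a = (Z - M a) \<times> (Z' - M a)" for a
  have le: "4 * card (missed a) \<le> s * s" if "a \<in> F" for a
    using card_missed_pairs(1)[OF Z] F(3) that unfolding missed_def by blast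
  have "4 * card (\<Union>a\<in>F. missed a) < 4 * (s * s)"
  proof (cases "F = {}")
    case True
    then show ?thesis using strict by (auto simp: odd_pos)
  next
    case False
    then obtain a0 where a0: "a0 \<in> F" "4 * card (missed a0) < s * s"
      using strict card_missed_pairs(2)[OF Z] F(3) unfolding missed_def by blast
    have "4 * card (\<Union>a\<in>F. missed a) \<le> 4 * (\<Sum>a\<in>F. card (missed a))"
      using card_UN_le[OF F(1), of missed] by simp
    also have "\<dots> = 4 * card (missed a0) + (\<Sum>a\<in>F - {a0}. 4 * card (missed a))"
      using F(1) a0(1) by (simp add: sum.remove sum_distrib_left)
    also have "(\<Sum>a\<in>F - {a0}. 4 * card (missed a)) \<le> (\<Sum>a\<in>F - {a0}. s * s)"
      using le by (intro sum_mono) auto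
    also have "\<dots> = card (F - {a0}) * (s * s)" by simp
    also have "\<dots> \<le> 3 * (s * s)"
      using F(1,2) a0(1) by (intro mult_le_mono1) (simp add: card_Diff_singleton)
    finally show ?thesis using a0(2) by linarith
  qed
  then have "\<not> Z \<times> Z' \<subseteq> (\<Union>a\<in>F. missed a)"
    using card_mono[of "\<Union>a\<in>F. missed a" "Z \<times> Z'"] F(1) Z(1,2,4,5)
    by (auto simp: missed_def card_cartesian_product)
  then obtain z z' where "z \<in> Z" "z' \<in> Z'" "(z, z') \<notin> (\<Union>a\<in>F. missed a)" by auto
  then show ?thesis unfolding missed_def by blast
qed

locale big_part_and_pairs =
  fixes V :: "'v set" and p :: "'v \<Rightarrow> nat" and r :: nat
  assumes finite_V: "finite V"
    and card_part_0: "card {v\<in>V. p v = 0} = 4"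
    and card_pair_part: "\<forall>i\<in>p ` V - {0}. card {v\<in>V. p v = i} = 2"
    and card_pair_parts: "card (p ` V - {0}) = r"
begin

definition big_part :: "'v set" where "big_part = {v\<in>V. p v = 0}"

definition pair_vertices :: "'v set" where "pair_vertices = {v\<in>V. p v \<noteq> 0}"

lemma big_part_subset: "big_part \<subseteq> V"
  and pair_vertices_subset: "pair_vertices \<subseteq> V"
  and V_eq_Un: "V = pair_vertices \<union> big_part"
  and pair_vertices_Int_big_part: "pair_vertices \<inter> big_part = {}"
  unfolding big_part_def pair_vertices_def by auto

lemma finite_subset_V: "S \<subseteq> V \<Longrightarrow> finite S"
  using finite_V finite_subset by blast

lemma card_big_part: "card big_part = 4"
  using card_part_0 unfolding big_part_def .

lemma card_pair_vertices: "card pair_vertices = 2 * r"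
proof -
  have "pair_vertices = (\<Union>i\<in>p ` V - {0}. {v\<in>V. p v = i})" unfolding pair_vertices_def by auto
  then have "card pair_vertices = (\<Sum>i\<in>p ` V - {0}. card {v\<in>V. p v = i})"
    using finite_V by (simp only:) (intro card_UN_disjoint, auto)
  also have "\<dots> = 2 * r" using card_pair_part card_pair_parts by simp
  finally show ?thesis .
qed

lemma card_V: "card V = 2 * r + 4"
proof -
  have "card V = card pair_vertices + card big_part"
    using card_Un_disjoint[of pair_vertices big_part] V_eq_Un pair_vertices_Int_big_part
      finite_subset_V[OF big_part_subset] finite_subset_V[OF pair_vertices_subset] by simp
  then show ?thesis using card_pair_vertices card_big_part by simp
qed

lemma card_le_if_inj_on_pair_vertices:
  assumes "S \<subseteq> pair_vertices" "inj_on p S"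
  shows "card S \<le> r"
proof -
  have "card S = card (p ` S)" using card_image[OF assms(2)] by simp
  also have "\<dots> \<le> card (p ` V - {0})"
    using assms(1) finite_V unfolding pair_vertices_def by (intro card_mono) auto
  finally show ?thesis using card_pair_parts by simp
qed

lemma card_le_if_inj_on:
  assumes "S \<subseteq> V" "inj_on p S"
  shows "card S \<le> r + 1"
proof -
  have "card S = card (p ` S)" using card_image[OF assms(2)] by simp
  also have "\<dots> \<le> card ((p ` V - {0}) \<union> {0})" using assms(1) finite_V by (intro card_mono) auto
  also have "\<dots> \<le> card (p ` V - {0}) + card {0::nat}" by (rule card_Un_le)
  also have "\<dots> = r + 1" using card_pair_parts by simp
  finally show ?thesis .
qed

lemma pair_part_eq:
  assumes "u \<in> V" "v \<in> V" "u \<noteq> v" "p u = p v" "p u \<noteq> 0"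
  shows "{w\<in>V. p w = p u} = {u, v}"
proof -
  have sub: "{u, v} \<subseteq> {w\<in>V. p w = p u}" using assms by auto
  have "card {w\<in>V. p w = p u} = card {u, v}" using assms card_pair_part by auto
  moreover have "finite {w\<in>V. p w = p u}" using finite_V by simp
  ultimately have "{u, v} = {w\<in>V. p w = p u}" using card_seteq[OF _ sub] by simp
  then show ?thesis by simp
qed

lemma exists_pair_part:
  assumes "1 \<le> r"
  obtains u v where "u \<in> pair_vertices" "v \<in> pair_vertices" "u \<noteq> v" "p u = p v"
proof -
  have "p ` V - {0} \<noteq> {}" using assms card_pair_parts by (metis card.empty not_one_le_zero)
  then obtain i where i: "i \<in> p ` V - {0}" by blast
  then obtain u v where uv: "{w\<in>V. p w = i} = {u, v}" "u \<noteq> v"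
    using card_pair_part by (meson card_2_iff)
  then have "u \<in> {w\<in>V. p w = i}" "v \<in> {w\<in>V. p w = i}" by auto
  then have "u \<in> pair_vertices" "v \<in> pair_vertices" "p u = p v"
    using i unfolding pair_vertices_def by auto
  then show ?thesis using that uv(2) by blast
qed

lemma remove_pair_parts:
  assumes "I \<subseteq> p ` V - {0}"
  shows "big_part_and_pairs {v\<in>V. p v \<notin> I} p (r - card I)"
proof
  show "finite {v\<in>V. p v \<notin> I}" using finite_V by simp
  have "{w\<in>{v\<in>V. p v \<notin> I}. p w = 0} = {w\<in>V. p w = 0}" using assms by auto
  then show "card {w\<in>{v\<in>V. p v \<notin> I}. p w = 0} = 4" using card_part_0 by simp
  show "\<forall>i\<in>p ` {v\<in>V. p v \<notin> I} - {0}. card {w\<in>{v\<in>V. p v \<notin> I}. p w = i} = 2"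
  proof
    fix i assume "i \<in> p ` {v\<in>V. p v \<notin> I} - {0}"
    moreover from this have "{w\<in>{v\<in>V. p v \<notin> I}. p w = i} = {w\<in>V. p w = i}" by auto
    ultimately show "card {w\<in>{v\<in>V. p v \<notin> I}. p w = i} = 2" using card_pair_part by auto
  qed
  have "p ` {v\<in>V. p v \<notin> I} - {0} = (p ` V - {0}) - I" by auto
  then show "card (p ` {v\<in>V. p v \<notin> I} - {0}) = r - card I"
    using assms finite_V card_pair_parts by (simp add: card_Diff_subset finite_subset)
qed

lemma colorable_if_color_common_to_big_part:
  assumes "\<forall>v\<in>V. finite (L v) \<and> r + 1 \<le> card (L v)" "\<forall>a\<in>big_part. c \<in> L a"
  shows "colorable V p L"
proof (rule colorable_extend_one_color)
  show "colorable pair_vertices p (\<lambda>v. L v - {c})"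
  proof (rule colorable_if_sum_ceil_half_parts_le[where s = r])
    show "finite pair_vertices" by (rule finite_subset_V[OF pair_vertices_subset])
    show "\<forall>v\<in>pair_vertices. finite (L v - {c}) \<and> r \<le> card (L v - {c})"
    proof
      fix v assume "v \<in> pair_vertices"
      then have "finite (L v)" "r + 1 \<le> card (L v)" using assms(1) pair_vertices_subset by auto
      then show "finite (L v - {c}) \<and> r \<le> card (L v - {c})"
        using diff_card_le_card_Diff[of "{c}" "L v"] by simp
    qed
    have "p ` pair_vertices = p ` V - {0}" unfolding pair_vertices_def by auto
    moreover have "{v\<in>pair_vertices. p v = i} = {v\<in>V. p v = i}" if "i \<noteq> 0" for i
      using that unfolding pair_vertices_def by auto
    ultimately have "sum_ceil_half_parts pair_vertices p = (\<Sum>i\<in>p ` V - {0}. 1)"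
      unfolding sum_ceil_half_parts_def using card_pair_part by (intro sum.cong) auto
    then show "sum_ceil_half_parts pair_vertices p \<le> r" using card_pair_parts by simp
    show "card pair_vertices \<le> 2 * r" using card_pair_vertices by simp
  qed
qed (use assms(2) in \<open>auto simp: big_part_def pair_vertices_def\<close>)

lemma sum_ceil_half_parts_eq: "sum_ceil_half_parts V p = r + 2"
proof -
  have "big_part \<noteq> {}" using card_big_part by auto
  then have "0 \<in> p ` V" unfolding big_part_def by force
  then have "sum_ceil_half_parts V p
      = (card {v\<in>V. p v = 0} + 1) div 2 + (\<Sum>i\<in>p ` V - {0}. (card {v\<in>V. p v = i} + 1) div 2)"
    unfolding sum_ceil_half_parts_def using finite_V by (simp add: sum.remove)
  also have "\<dots> = 2 + (\<Sum>i\<in>p ` V - {0}. 1)"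
    using card_part_0 card_pair_part by (intro arg_cong2[where f = "(+)"] sum.cong) auto
  finally show ?thesis using card_pair_parts by simp
qed

lemma colorable_if_lists_ge:
  assumes "\<forall>v\<in>V. finite (L v) \<and> r + 2 \<le> card (L v)"
  shows "colorable V p L"
  by (rule colorable_if_sum_ceil_half_parts_le[OF finite_V assms])
    (simp_all add: sum_ceil_half_parts_eq card_V)

end

locale disjoint_pair_lists = big_part_and_pairs V p r
  for V :: "'v set" and p r +
  fixes L :: "'v \<Rightarrow> 'c set"
  assumes lists: "\<forall>v\<in>V. finite (L v) \<and> r + 1 \<le> card (L v)"
    and pair_lists_disjoint: "\<forall>u\<in>V. \<forall>v\<in>V. u \<noteq> v \<longrightarrow> p u = p v \<longrightarrow> p u \<noteq> 0 \<longrightarrow> L u \<inter> L v = {}"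
begin

lemma finite_L: "v \<in> V \<Longrightarrow> finite (L v)"
  and card_L: "v \<in> V \<Longrightarrow> r + 1 \<le> card (L v)"
  using lists by auto

lemma finite_UN_L: "S \<subseteq> V \<Longrightarrow> finite (\<Union> (L ` S))"
  using finite_subset_V finite_L by blast

lemma card_L_le_card_UN:
  assumes "S \<subseteq> V" "v \<in> S"
  shows "card (L v) \<le> card (\<Union> (L ` S))"
  using assms finite_UN_L by (intro card_mono) auto

lemma card_UN_L_if_disjoint:
  assumes "S \<subseteq> V" "u \<in> S" "v \<in> S" "u \<noteq> v" "L u \<inter> L v = {}"
  shows "2 * r + 2 \<le> card (\<Union> (L ` S))"
proof -
  have "card (L u) + card (L v) = card (L u \<union> L v)"
    using assms finite_L by (simp add: card_Un_disjoint subsetD)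
  also have "\<dots> \<le> card (\<Union> (L ` S))" using assms finite_UN_L by (intro card_mono) auto
  finally have "card (L u) + card (L v) \<le> card (\<Union> (L ` S))" .
  moreover have "r + 1 \<le> card (L u)" "r + 1 \<le> card (L v)" using card_L assms by auto
  ultimately show ?thesis by linarith
qed

lemma card_UN_L_if_pair:
  assumes "S \<subseteq> V" "u \<in> S" "v \<in> S" "u \<noteq> v" "p u = p v" "p u \<noteq> 0"
  shows "2 * r + 2 \<le> card (\<Union> (L ` S))"
  using assms pair_lists_disjoint by (intro card_UN_L_if_disjoint) auto

lemma card_UN_L_pair_vertices:
  assumes "1 \<le> r"
  shows "2 * r + 2 \<le> card (\<Union> (L ` pair_vertices))"
proof -
  obtain u v where "u \<in> pair_vertices" "v \<in> pair_vertices" "u \<noteq> v" "p u = p v"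
    using exists_pair_part[OF assms] .
  moreover from this have "p u \<noteq> 0" unfolding pair_vertices_def by simp
  ultimately show ?thesis using card_UN_L_if_pair pair_vertices_subset by blast
qed

(* Sets of this kind are the only obstruction to Hall's condition for the pair vertices once
   at most two colours are reserved for the big part. *)
definition tight :: "'v set \<Rightarrow> bool" where
  "tight S \<longleftrightarrow> S \<subseteq> pair_vertices \<and> inj_on p S \<and> card S = r \<and> card (\<Union> (L ` S)) = r + 1"

lemma tight_subset: "tight S \<Longrightarrow> S \<subseteq> V"
  unfolding tight_def using pair_vertices_subset by blast

lemma list_eq_if_subset_tight:
  assumes "tight S" "a \<in> V" "L a \<subseteq> \<Union> (L ` S)"
  shows "L a = \<Union> (L ` S)"
  using card_seteq[OF finite_UN_L[OF tight_subset[OF assms(1)]] assms(3)] assms card_L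
  unfolding tight_def by fastforce

lemma tight_image:
  assumes "tight S"
  shows "p ` S = p ` V - {0}"
proof -
  have S: "S \<subseteq> pair_vertices" "inj_on p S" "card S = r" using assms unfolding tight_def by auto
  have sub: "p ` S \<subseteq> p ` V - {0}" using S(1) unfolding pair_vertices_def by auto
  have "card (p ` S) = r" using card_image[OF S(2)] S(3) by simp
  then show ?thesis using card_seteq[OF _ sub] card_pair_parts finite_V by simp
qed

lemma tight_unions_eq_or_disjoint:
  assumes "tight S1" "tight S2" "1 \<le> r"
  shows "\<Union> (L ` S1) = \<Union> (L ` S2) \<or> \<Union> (L ` S1) \<inter> \<Union> (L ` S2) = {}"
proof -
  have "p ` V - {0} \<noteq> {}" using assms(3) card_pair_parts by (metis card.empty not_one_le_zero)
  then obtain i where i: "i \<in> p ` V - {0}" by blast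
  obtain u1 u2 where u: "u1 \<in> S1" "u2 \<in> S2" "p u1 = i" "p u2 = i"
    using tight_image[OF assms(1)] tight_image[OF assms(2)] i by (metis imageE)
  have V: "u1 \<in> V" "u2 \<in> V" using u tight_subset assms(1,2) by blast+
  have "L u1 = \<Union> (L ` S1)" "L u2 = \<Union> (L ` S2)"
    using list_eq_if_subset_tight assms(1,2) u V by blast+
  moreover have "u1 = u2 \<or> L u1 \<inter> L u2 = {}"
    using pair_lists_disjoint V u i by (metis DiffE singletonI)
  ultimately show ?thesis by auto
qed

lemma colorable_pair_vertices_avoiding:
  assumes "finite H" "card H \<le> 2" "\<forall>S. tight S \<longrightarrow> card (H \<inter> \<Union> (L ` S)) \<le> 1"
  shows "colorable pair_vertices p (\<lambda>v. L v - H)"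
proof (rule colorable_if_Hall)
  fix J assume J: "J \<subseteq> pair_vertices"
  then have JV: "J \<subseteq> V" using pair_vertices_subset by blast
  define U where "U = \<Union> (L ` J)"
  have "finite U" using finite_UN_L[OF JV] unfolding U_def .
  then have card_U_H: "card (U - H) = card U - card (U \<inter> H)"
    by (simp add: card_Diff_subset_Int)
  have "card (U \<inter> H) \<le> 2" using assms(1,2) card_mono[of H "U \<inter> H"] by simp
  have "card J \<le> card (U - H)"
  proof (cases "inj_on p J")
    case False
    then obtain u v where uv: "u \<in> J" "v \<in> J" "u \<noteq> v" "p u = p v" unfolding inj_on_def by blast
    moreover from this have "p u \<noteq> 0" using J unfolding pair_vertices_def by auto
    ultimately have "2 * r + 2 \<le> card U" unfolding U_def using card_UN_L_if_pair[OF JV] by blast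
    moreover have "card J \<le> 2 * r"
      using card_mono[OF finite_subset_V[OF pair_vertices_subset] J] card_pair_vertices by simp
    ultimately show ?thesis using card_U_H \<open>card (U \<inter> H) \<le> 2\<close> by linarith
  next
    case True
    show ?thesis
    proof (cases "J = {}")
      case False
      then obtain v where "v \<in> J" by blast
      then have "r + 1 \<le> card U" using card_L_le_card_UN[OF JV] card_L JV unfolding U_def by force
      moreover have "card J \<le> r" using card_le_if_inj_on_pair_vertices[OF J True] .
      moreover have "card (U \<inter> H) \<le> 1" if "card J = r" "card U = r + 1"
      proof -
        have "tight J" using that J True unfolding tight_def U_def by blast
        then show ?thesis using assms(3) unfolding U_def by (simp add: Int_commute)
      qed
      ultimately show ?thesis using card_U_H \<open>card (U \<inter> H) \<le> 2\<close> by linarith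
    qed simp
  qed
  moreover have "\<Union> ((\<lambda>v. L v - H) ` J) = U - H" unfolding U_def by auto
  ultimately show "card J \<le> card (\<Union> ((\<lambda>v. L v - H) ` J))" by simp
qed (use finite_subset_V[OF pair_vertices_subset] finite_L pair_vertices_subset in auto)

lemma colorable_if_hitting_set:
  assumes "finite H" "card H \<le> 2" "\<forall>a\<in>big_part. L a \<inter> H \<noteq> {}"
    and "\<forall>S. tight S \<longrightarrow> card (H \<inter> \<Union> (L ` S)) \<le> 1"
  shows "colorable V p L"
proof (rule colorable_extend[where g = "\<lambda>a. SOME h. h \<in> L a \<inter> H"])
  show "colorable pair_vertices p (\<lambda>v. L v - H)"
    using colorable_pair_vertices_avoiding assms(1,2,4) .
  have "V - pair_vertices = big_part" unfolding big_part_def pair_vertices_def by auto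
  show "\<forall>v\<in>V - pair_vertices. (SOME h. h \<in> L v \<inter> H) \<in> L v \<inter> H"
  proof
    fix v assume "v \<in> V - pair_vertices"
    then have "\<exists>h. h \<in> L v \<inter> H" using assms(3) \<open>V - pair_vertices = big_part\<close> by blast
    then show "(SOME h. h \<in> L v \<inter> H) \<in> L v \<inter> H" by (rule someI_ex)
  qed
  show "\<forall>u\<in>V - pair_vertices. \<forall>w\<in>V - pair_vertices. p u \<noteq> p w \<longrightarrow>
      (SOME h. h \<in> L u \<inter> H) \<noteq> (SOME h. h \<in> L w \<inter> H)"
    unfolding pair_vertices_def by auto
qed (rule pair_vertices_subset)

lemma card_UN_L_if_three_big:
  assumes "\<forall>u\<in>big_part. \<forall>v\<in>big_part. u \<noteq> v \<longrightarrow> L u \<inter> L v = {}"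
    and "J \<subseteq> V" "3 \<le> card (J \<inter> big_part)"
  shows "3 * r + 3 \<le> card (\<Union> (L ` J))"
proof -
  have JA: "J \<inter> big_part \<subseteq> V" using assms(2) by blast
  have "3 * (r + 1) \<le> card (J \<inter> big_part) * (r + 1)" using assms(3) by (rule mult_le_mono1)
  also have "\<dots> = (\<Sum>a\<in>J \<inter> big_part. r + 1)" by simp
  also have "\<dots> \<le> (\<Sum>a\<in>J \<inter> big_part. card (L a))"
    using card_L JA by (intro sum_mono) auto
  also have "\<dots> = card (\<Union> (L ` (J \<inter> big_part)))"
    using finite_subset_V[OF JA] finite_L JA assms(1) by (intro card_UN_disjoint[symmetric]) auto
  also have "\<dots> \<le> card (\<Union> (L ` J))" using finite_UN_L[OF assms(2)] by (intro card_mono) auto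
  finally show ?thesis by simp
qed

lemma colorable_if_big_part_lists_disjoint:
  assumes "1 \<le> r" "\<forall>u\<in>big_part. \<forall>v\<in>big_part. u \<noteq> v \<longrightarrow> L u \<inter> L v = {}"
  shows "colorable V p L"
proof (rule colorable_if_Hall)
  fix J assume J: "J \<subseteq> V"
  have "J = (J \<inter> pair_vertices) \<union> (J \<inter> big_part)" using J V_eq_Un by blast
  then have "card J = card ((J \<inter> pair_vertices) \<union> (J \<inter> big_part))" by (rule arg_cong)
  also have "\<dots> = card (J \<inter> pair_vertices) + card (J \<inter> big_part)"
    using finite_subset_V[OF J] pair_vertices_Int_big_part by (intro card_Un_disjoint) auto
  finally have card_J: "card J = card (J \<inter> pair_vertices) + card (J \<inter> big_part)" .
  have "card (J \<inter> pair_vertices) \<le> 2 * r"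
    using card_mono[OF finite_subset_V[OF pair_vertices_subset], of "J \<inter> pair_vertices"]
      card_pair_vertices by simp
  show "card J \<le> card (\<Union> (L ` J))"
  proof (cases "3 \<le> card (J \<inter> big_part)")
    case True
    then have "3 * r + 3 \<le> card (\<Union> (L ` J))" using card_UN_L_if_three_big assms(2) J by blast
    moreover have "card J \<le> 2 * r + 4" using card_mono[OF finite_V J] card_V by simp
    ultimately show ?thesis using assms(1) by linarith
  next
    case False
    show ?thesis
    proof (cases "inj_on p J")
      case False
      then obtain u v where uv: "u \<in> J" "v \<in> J" "u \<noteq> v" "p u = p v" unfolding inj_on_def by blast
      have "L u \<inter> L v = {}"
      proof (cases "p u = 0")
        case True
        then show ?thesis using assms(2) uv J unfolding big_part_def by auto
      next
        case False
        then show ?thesis using pair_lists_disjoint uv J by blast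
      qed
      then have "2 * r + 2 \<le> card (\<Union> (L ` J))" using card_UN_L_if_disjoint[OF J uv(1-3)] by blast
      then show ?thesis using card_J \<open>card (J \<inter> pair_vertices) \<le> 2 * r\<close> \<open>\<not> 3 \<le> _\<close> by linarith
    next
      case True
      show ?thesis
      proof (cases "J = {}")
        case False
        then obtain v where v: "v \<in> J" by blast
        have "card J \<le> r + 1" using card_le_if_inj_on[OF J True] .
        also have "\<dots> \<le> card (L v)" using card_L v J by auto
        also have "\<dots> \<le> card (\<Union> (L ` J))" using card_L_le_card_UN[OF J v] .
        finally show ?thesis .
      qed simp
    qed
  qed
qed (use finite_V finite_L in auto)

lemma Diff_two_big_eq:
  assumes "big_part = {a1, a2, a3, a4}" "distinct [a1, a2, a3, a4]"
  shows "V - {a1, a2} = pair_vertices \<union> {a3, a4}"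
proof -
  have "a1 \<notin> pair_vertices" "a2 \<notin> pair_vertices" "a3 \<notin> {a1, a2}" "a4 \<notin> {a1, a2}"
    using assms pair_vertices_Int_big_part by auto
  then show ?thesis using assms(1) V_eq_Un by blast
qed

lemma card_le_card_UN_minus_color_if_inj:
  assumes a: "a3 \<in> V" "a4 \<in> V" "c \<notin> L a3" "c \<notin> L a4" "r + 2 \<le> card (L a3 \<union> L a4)"
    and J: "J \<subseteq> pair_vertices \<union> {a3, a4}" "inj_on p (J \<inter> pair_vertices)"
  shows "card J \<le> card (\<Union> (L ` J) - {c})"
proof -
  have JV: "J \<subseteq> V" using J(1) a(1,2) pair_vertices_subset by blast
  have fin: "finite (\<Union> (L ` J))" using finite_UN_L[OF JV] .
  have "J = (J \<inter> pair_vertices) \<union> (J \<inter> {a3, a4})" using J(1) by blast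
  then have "card J = card ((J \<inter> pair_vertices) \<union> (J \<inter> {a3, a4}))" by (rule arg_cong)
  also have "\<dots> \<le> card (J \<inter> pair_vertices) + card (J \<inter> {a3, a4})" by (rule card_Un_le)
  also have "card (J \<inter> pair_vertices) \<le> r"
    using card_le_if_inj_on_pair_vertices[OF _ J(2)] by blast
  finally have card_J: "card J \<le> r + card (J \<inter> {a3, a4})" by simp
  consider "a3 \<in> J" "a4 \<in> J" | a where "a \<in> {a3, a4}" "J \<inter> {a3, a4} = {a}" | "J \<inter> {a3, a4} = {}"
    by blast
  then show ?thesis
  proof cases
    case 1
    have "card (J \<inter> {a3, a4}) \<le> card {a3, a4}" by (rule card_mono) auto
    then have "card J \<le> r + 2" using card_J card_insert_le_m1[of 2 "{a4}" a3] by simp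
    also have "\<dots> \<le> card (L a3 \<union> L a4)" by (rule a(5))
    also have "\<dots> \<le> card (\<Union> (L ` J) - {c})" using 1 a(3,4) fin by (intro card_mono) auto
    finally show ?thesis .
  next
    case (2 a)
    then have "card J \<le> r + 1" using card_J by simp
    also have "\<dots> \<le> card (L a)" using card_L a(1,2) 2(1) by blast
    also have "\<dots> \<le> card (\<Union> (L ` J) - {c})" using 2 a(3,4) fin by (intro card_mono) auto
    finally show ?thesis .
  next
    case 3
    show ?thesis
    proof (cases "J = {}")
      case False
      then obtain v where v: "v \<in> J" by blast
      have "card J \<le> r" using card_J 3 by simp
      also have "r \<le> card (L v - {c})"
        using card_L[of v] diff_card_le_card_Diff[of "{c}" "L v"] v JV by fastforce
      also have "\<dots> \<le> card (\<Union> (L ` J) - {c})" using v fin by (intro card_mono) auto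
      finally show ?thesis .
    qed simp
  qed
qed

lemma card_le_card_UN_minus_color:
  assumes A: "big_part = {a1, a2, a3, a4}" "distinct [a1, a2, a3, a4]"
    and c: "c \<notin> L a3" "c \<notin> L a4"
    and card_a34: "r + 2 \<le> card (L a3 \<union> L a4)"
    and card_rest: "2 * r + 2 \<le> card (\<Union> (L ` (V - {a1, a2})) - {c})"
    and J: "J \<subseteq> V - {a1, a2}"
  shows "card J \<le> card (\<Union> (L ` J) - {c})"
proof (cases "inj_on p (J \<inter> pair_vertices)")
  case True
  have "a3 \<in> V" "a4 \<in> V" using A(1) big_part_subset by auto
  then show ?thesis
    using card_le_card_UN_minus_color_if_inj c card_a34 J True Diff_two_big_eq[OF A] by blast
next
  case False
  then obtain u v where "u \<in> J \<inter> pair_vertices" "v \<in> J \<inter> pair_vertices" "u \<noteq> v" "p u = p v"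
    unfolding inj_on_def by blast
  then have uv: "u \<in> J" "v \<in> J" "u \<noteq> v" "p u = p v" and "p u \<noteq> 0"
    unfolding pair_vertices_def by auto
  have JV: "J \<subseteq> V" using J by blast
  have "2 * r + 2 \<le> card (\<Union> (L ` J))" using card_UN_L_if_pair[OF JV uv] \<open>p u \<noteq> 0\<close> .
  then have "2 * r + 1 \<le> card (\<Union> (L ` J) - {c})"
    using diff_card_le_card_Diff[of "{c}" "\<Union> (L ` J)"] by simp
  have "a1 \<in> V" "a2 \<in> V" using A(1) big_part_subset by auto
  then have card_V2: "card (V - {a1, a2}) = 2 * r + 2"
    using A(2) card_V finite_V by (simp add: card_Diff_subset)
  show ?thesis
  proof (cases "J = V - {a1, a2}")
    case True
    then show ?thesis using card_rest card_V2 by simp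
  next
    case False
    then have "card J < card (V - {a1, a2})" using J finite_V by (intro psubset_card_mono) auto
    then show ?thesis using \<open>2 * r + 1 \<le> _\<close> card_V2 by linarith
  qed
qed

lemma colorable_if_two_share_color:
  assumes A: "big_part = {a1, a2, a3, a4}" "distinct [a1, a2, a3, a4]"
    and c: "c \<in> L a1" "c \<in> L a2" "c \<notin> L a3" "c \<notin> L a4"
    and card_a34: "r + 2 \<le> card (L a3 \<union> L a4)"
    and card_rest: "2 * r + 2 \<le> card (\<Union> (L ` (V - {a1, a2})) - {c})"
  shows "colorable V p L"
proof -
  have col: "colorable (V - {a1, a2}) p (\<lambda>v. L v - {c})"
  proof (rule colorable_if_Hall)
    fix J assume J: "J \<subseteq> V - {a1, a2}"
    have "\<Union> ((\<lambda>v. L v - {c}) ` J) = \<Union> (L ` J) - {c}" by auto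
    then show "card J \<le> card (\<Union> ((\<lambda>v. L v - {c}) ` J))"
      using card_le_card_UN_minus_color[OF A c(3,4) card_a34 card_rest J] by simp
  next
    show "\<forall>v\<in>V - {a1, a2}. finite (L v - {c})" using finite_L by blast
  qed (use finite_V in simp)
  have "a1 \<in> V" "a2 \<in> V" using A(1) big_part_subset by auto
  then have "V - (V - {a1, a2}) = {a1, a2}" by auto
  moreover have "a1 \<in> big_part" "a2 \<in> big_part" using A(1) by simp_all
  then have "p a1 = 0" "p a2 = 0" unfolding big_part_def by simp_all
  ultimately show ?thesis
    using c by (intro colorable_extend_one_color[OF col Diff_subset]) auto
qed

lemma not_in_third_list:
  assumes "\<forall>c. card {a\<in>big_part. c \<in> L a} \<le> 2" "distinct [x, y, z]"
    and "x \<in> big_part" "y \<in> big_part" "z \<in> big_part" "c \<in> L x" "c \<in> L y"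
  shows "c \<notin> L z"
proof
  assume "c \<in> L z"
  then have "{x, y, z} \<subseteq> {a\<in>big_part. c \<in> L a}" using assms(3-7) by auto
  then have "card {x, y, z} \<le> card {a\<in>big_part. c \<in> L a}"
    using finite_subset_V[OF big_part_subset] by (intro card_mono) auto
  moreover have "card {x, y, z} = 3" using assms(2) by simp
  ultimately show False using assms(1)[rule_format, of c] by linarith
qed

lemma exists_color_avoiding_tight_unions_with:
  assumes "1 \<le> r" "a \<in> V" "c \<notin> L a"
  shows "\<exists>h\<in>L a. \<forall>S. tight S \<and> c \<in> \<Union> (L ` S) \<longrightarrow> h \<notin> \<Union> (L ` S)"
proof (cases "\<exists>S0. tight S0 \<and> c \<in> \<Union> (L ` S0)")
  case True
  then obtain S0 where S0: "tight S0" "c \<in> \<Union> (L ` S0)" by blast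
  have "\<not> L a \<subseteq> \<Union> (L ` S0)"
    using list_eq_if_subset_tight[OF S0(1) assms(2)] S0(2) assms(3) by blast
  then obtain h where h: "h \<in> L a" "h \<notin> \<Union> (L ` S0)" by blast
  have "h \<notin> \<Union> (L ` S)" if "tight S" "c \<in> \<Union> (L ` S)" for S
    using tight_unions_eq_or_disjoint[OF that(1) S0(1) assms(1)] that(2) S0(2) h(2) by blast
  then show ?thesis using h(1) by blast
next
  case False
  have "L a \<noteq> {}" using card_L[OF assms(2)] by auto
  then show ?thesis using False by blast
qed

lemma colorable_if_color_in_exactly_three_big_lists:
  assumes "1 \<le> r" "card {a\<in>big_part. c \<in> L a} = 3"
  shows "colorable V p L"
proof -
  have "{a\<in>big_part. c \<in> L a} \<noteq> big_part" using assms(2) card_big_part by auto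
  then obtain a0 where a0: "a0 \<in> big_part" "c \<notin> L a0" by blast
  have others: "c \<in> L a" if "a \<in> big_part" "a \<noteq> a0" for a
  proof (rule ccontr)
    assume "c \<notin> L a"
    then have "{b\<in>big_part. c \<in> L b} \<subseteq> big_part - {a, a0}" using a0 by auto
    then have "card {b\<in>big_part. c \<in> L b} \<le> card (big_part - {a, a0})"
      using finite_subset_V[OF big_part_subset] by (intro card_mono) auto
    also have "\<dots> = 2" using card_big_part that a0(1) by (simp add: card_Diff_subset)
    finally show False using assms(2) by simp
  qed
  have "a0 \<in> V" using a0(1) big_part_subset by blast
  then obtain h where h: "h \<in> L a0" "\<forall>S. tight S \<and> c \<in> \<Union> (L ` S) \<longrightarrow> h \<notin> \<Union> (L ` S)"
    using exists_color_avoiding_tight_unions_with[OF assms(1) _ a0(2)] by blast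
  show ?thesis
  proof (rule colorable_if_hitting_set[of "{c, h}"])
    show "\<forall>a\<in>big_part. L a \<inter> {c, h} \<noteq> {}"
    proof
      fix a assume "a \<in> big_part"
      then show "L a \<inter> {c, h} \<noteq> {}" using others[of a] h(1) by (cases "a = a0") auto
    qed
    show "\<forall>S. tight S \<longrightarrow> card ({c, h} \<inter> \<Union> (L ` S)) \<le> 1"
    proof (intro allI impI)
      fix S assume "tight S"
      then have "c \<notin> \<Union> (L ` S) \<or> h \<notin> \<Union> (L ` S)" using h(2) by blast
      then show "card ({c, h} \<inter> \<Union> (L ` S)) \<le> 1" by (rule card_Int_doubleton_le_1)
    qed
    show "card {c, h} \<le> 2" by (simp add: card_insert_if)
  qed simp
qed

lemma card_Un_lists_if_common_colors_in_tight:
  assumes "tight S" "a \<in> V" "b \<in> V" "L a \<inter> L b \<subseteq> \<Union> (L ` S)" "x \<in> \<Union> (L ` S)" "x \<notin> L a"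
  shows "r + 2 \<le> card (L a \<union> L b)"
proof (rule ccontr)
  assume "\<not> ?thesis"
  then have le: "card (L a \<union> L b) \<le> r + 1" by linarith
  have fin: "finite (L a \<union> L b)" using finite_L assms(2,3) by blast
  have "card (L a \<union> L b) \<le> card (L a)" "card (L a \<union> L b) \<le> card (L b)"
    using le card_L assms(2,3) by fastforce+
  then have "L a = L a \<union> L b" "L b = L a \<union> L b"
    using card_seteq[OF fin Un_upper1] card_seteq[OF fin Un_upper2] by blast+
  then have "L a \<subseteq> \<Union> (L ` S)" using assms(4) by blast
  then have "L a = \<Union> (L ` S)" using list_eq_if_subset_tight assms(1,2) by blast
  then show False using assms(5,6) by blast
qed

lemma UN_lists_eq_if_few_colors:
  assumes "1 \<le> r" "a \<in> big_part" "b \<in> big_part"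
    and "\<not> 2 * r + 2 \<le> card (\<Union> (L ` (V - {a, b})) - {c})"
  shows "\<Union> (L ` (V - {a, b})) = \<Union> (L ` pair_vertices)"
    and "card (\<Union> (L ` pair_vertices)) = 2 * r + 2"
proof -
  have sub_V: "pair_vertices \<subseteq> V - {a, b}"
    using assms(2,3) pair_vertices_subset pair_vertices_Int_big_part by blast
  have fin: "finite (\<Union> (L ` (V - {a, b})))" using finite_UN_L by blast
  have "card (\<Union> (L ` (V - {a, b}))) \<le> 2 * r + 2"
    using assms(4) diff_card_le_card_Diff[of "{c}" "\<Union> (L ` (V - {a, b}))"] by simp
  moreover have sub: "\<Union> (L ` pair_vertices) \<subseteq> \<Union> (L ` (V - {a, b}))" using sub_V by blast
  moreover have "2 * r + 2 \<le> card (\<Union> (L ` pair_vertices))" using card_UN_L_pair_vertices assms(1) .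
  ultimately show card_eq: "card (\<Union> (L ` pair_vertices)) = 2 * r + 2"
    using card_mono[OF fin sub] by linarith
  show "\<Union> (L ` (V - {a, b})) = \<Union> (L ` pair_vertices)"
    using card_seteq[OF fin sub] card_eq \<open>card (\<Union> (L ` (V - {a, b}))) \<le> 2 * r + 2\<close> by simp
qed

(* The only step where the parity of r matters. *)
lemma colorable_if_big_lists_within_pair_colors:
  assumes "1 \<le> r" "tight S0"
    and big_lists: "\<forall>a\<in>big_part. L a \<subseteq> \<Union> (L ` pair_vertices)"
    and card_W: "card (\<Union> (L ` pair_vertices)) = 2 * r + 2"
    and parity: "even r \<or> (\<exists>a\<in>big_part. r + 2 \<le> card (L a))"
  shows "colorable V p L"
proof -
  define W Z where "W = \<Union> (L ` pair_vertices)" and "Z = \<Union> (L ` S0)"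
  have "finite W" unfolding W_def using finite_UN_L[OF pair_vertices_subset] .
  have "Z \<subseteq> W" using assms(2) unfolding tight_def W_def Z_def by blast
  have card_Z: "card Z = r + 1" using assms(2) unfolding tight_def Z_def by blast
  then have card_Z': "card (W - Z) = r + 1"
    using card_W \<open>Z \<subseteq> W\<close> \<open>finite W\<close> unfolding W_def by (simp add: card_Diff_subset finite_subset)
  obtain z z' where z: "z \<in> Z" "z' \<in> W - Z" "\<forall>a\<in>big_part. z \<in> L a \<or> z' \<in> L a"
  proof -
    have "\<forall>a\<in>big_part. L a \<subseteq> Z \<union> (W - Z) \<and> r + 1 \<le> card (L a)"
      using big_lists card_L big_part_subset \<open>Z \<subseteq> W\<close> unfolding W_def by blast
    moreover have "odd (r + 1) \<or> (\<exists>a\<in>big_part. r + 1 + 1 \<le> card (L a))" using parity by auto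
    moreover have "finite Z" "finite (W - Z)" using \<open>finite W\<close> \<open>Z \<subseteq> W\<close> finite_subset by auto
    ultimately have "\<exists>z\<in>Z. \<exists>z'\<in>W - Z. \<forall>a\<in>big_part. z \<in> L a \<or> z' \<in> L a"
      using card_Z card_Z' finite_subset_V[OF big_part_subset] card_big_part
      by (intro exists_pair_meeting_all) auto
    then show ?thesis using that by blast
  qed
  show ?thesis
  proof (rule colorable_if_hitting_set[of "{z, z'}"])
    show "\<forall>a\<in>big_part. L a \<inter> {z, z'} \<noteq> {}" using z(3) by blast
    show "\<forall>S. tight S \<longrightarrow> card ({z, z'} \<inter> \<Union> (L ` S)) \<le> 1"
    proof (intro allI impI)
      fix S assume "tight S"
      then have "\<Union> (L ` S) = Z \<or> \<Union> (L ` S) \<inter> Z = {}"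
        using tight_unions_eq_or_disjoint[OF _ assms(2,1)] unfolding Z_def by blast
      then have "z \<notin> \<Union> (L ` S) \<or> z' \<notin> \<Union> (L ` S)" using z(1,2) by blast
      then show "card ({z, z'} \<inter> \<Union> (L ` S)) \<le> 1" by (rule card_Int_doubleton_le_1)
    qed
    show "card {z, z'} \<le> 2" by (simp add: card_insert_if)
  qed simp
qed

lemma colorable_if_common_colors_within_tight:
  assumes r: "1 \<le> r" and A: "big_part = {a1, a2, a3, a4}" "distinct [a1, a2, a3, a4]"
    and few: "\<forall>c. card {a\<in>big_part. c \<in> L a} \<le> 2"
    and S0: "tight S0" "L a1 \<inter> L a2 \<subseteq> \<Union> (L ` S0)" "L a3 \<inter> L a4 \<subseteq> \<Union> (L ` S0)"
    and c0: "c0 \<in> L a1" "c0 \<in> L a2" and d0: "d0 \<in> L a3" "d0 \<in> L a4"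
    and parity: "even r \<or> (\<exists>a\<in>big_part. r + 2 \<le> card (L a))"
  shows "colorable V p L"
proof -
  have a_V: "a1 \<in> V" "a2 \<in> V" "a3 \<in> V" "a4 \<in> V" using A(1) big_part_subset by auto
  have A': "big_part = {a3, a4, a1, a2}" "distinct [a3, a4, a1, a2]" using A by auto
  have c0': "c0 \<notin> L a3" "c0 \<notin> L a4"
    using not_in_third_list[OF few, of a1 a2] c0 A by auto
  have d0': "d0 \<notin> L a1" "d0 \<notin> L a2"
    using not_in_third_list[OF few, of a3 a4] d0 A by auto
  have card_34: "r + 2 \<le> card (L a3 \<union> L a4)"
    using card_Un_lists_if_common_colors_in_tight[OF S0(1) a_V(3,4) S0(3) _ c0'(1)] S0(2) c0
    by blast
  have card_12: "r + 2 \<le> card (L a1 \<union> L a2)"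
    using card_Un_lists_if_common_colors_in_tight[OF S0(1) a_V(1,2) S0(2) _ d0'(1)] S0(3) d0
    by blast
  consider "2 * r + 2 \<le> card (\<Union> (L ` (V - {a1, a2})) - {c0})"
    | "2 * r + 2 \<le> card (\<Union> (L ` (V - {a3, a4})) - {d0})"
    | "\<not> 2 * r + 2 \<le> card (\<Union> (L ` (V - {a1, a2})) - {c0})"
      "\<not> 2 * r + 2 \<le> card (\<Union> (L ` (V - {a3, a4})) - {d0})"
    by blast
  then show ?thesis
  proof cases
    case 1
    then show ?thesis using colorable_if_two_share_color[OF A c0 c0' card_34] by blast
  next
    case 2
    then show ?thesis using colorable_if_two_share_color[OF A' d0 d0' card_12] by blast
  next
    case 3
    have A_in: "a1 \<in> big_part" "a2 \<in> big_part" "a3 \<in> big_part" "a4 \<in> big_part" using A(1) by auto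
    note eq12 = UN_lists_eq_if_few_colors[OF r A_in(1,2) 3(1)]
    note eq34 = UN_lists_eq_if_few_colors[OF r A_in(3,4) 3(2)]
    have "\<forall>a\<in>big_part. L a \<subseteq> \<Union> (L ` pair_vertices)"
    proof
      fix a assume "a \<in> big_part"
      then have "a \<in> V - {a1, a2} \<or> a \<in> V - {a3, a4}" using A a_V by auto
      then have "L a \<subseteq> \<Union> (L ` (V - {a1, a2})) \<or> L a \<subseteq> \<Union> (L ` (V - {a3, a4}))" by blast
      then show "L a \<subseteq> \<Union> (L ` pair_vertices)" unfolding eq12(1) eq34(1) by blast
    qed
    then show ?thesis
      by (rule colorable_if_big_lists_within_pair_colors[OF r S0(1) _ eq12(2) parity])
  qed
qed

lemma colorable_if_both_pairs_meet:
  assumes r: "1 \<le> r" and A: "big_part = {a1, a2, a3, a4}" "distinct [a1, a2, a3, a4]"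
    and few: "\<forall>c. card {a\<in>big_part. c \<in> L a} \<le> 2"
    and meet: "L a1 \<inter> L a2 \<noteq> {}" "L a3 \<inter> L a4 \<noteq> {}"
    and parity: "even r \<or> (\<exists>a\<in>big_part. r + 2 \<le> card (L a))"
  shows "colorable V p L"
proof (cases "\<exists>c d. c \<in> L a1 \<inter> L a2 \<and> d \<in> L a3 \<inter> L a4 \<and>
    (\<forall>S. tight S \<longrightarrow> card ({c, d} \<inter> \<Union> (L ` S)) \<le> 1)")
  case True
  then obtain c d where cd: "c \<in> L a1 \<inter> L a2" "d \<in> L a3 \<inter> L a4"
    "\<forall>S. tight S \<longrightarrow> card ({c, d} \<inter> \<Union> (L ` S)) \<le> 1" by blast
  show ?thesis
  proof (rule colorable_if_hitting_set[OF _ _ _ cd(3)])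
    show "\<forall>a\<in>big_part. L a \<inter> {c, d} \<noteq> {}" using A(1) cd(1,2) by auto
    show "card {c, d} \<le> 2" by (simp add: card_insert_if)
  qed simp
next
  case False
  have common: "\<exists>S. tight S \<and> c \<in> \<Union> (L ` S) \<and> d \<in> \<Union> (L ` S)"
    if "c \<in> L a1 \<inter> L a2" "d \<in> L a3 \<inter> L a4" for c d
  proof (rule ccontr)
    assume none: "\<nexists>S. tight S \<and> c \<in> \<Union> (L ` S) \<and> d \<in> \<Union> (L ` S)"
    have "\<forall>S. tight S \<longrightarrow> card ({c, d} \<inter> \<Union> (L ` S)) \<le> 1"
    proof (intro allI impI)
      fix S assume "tight S"
      then have "c \<notin> \<Union> (L ` S) \<or> d \<notin> \<Union> (L ` S)" using none by blast
      then show "card ({c, d} \<inter> \<Union> (L ` S)) \<le> 1" by (rule card_Int_doubleton_le_1)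
    qed
    then show False using False that by blast
  qed
  obtain c0 d0 where c0: "c0 \<in> L a1 \<inter> L a2" and d0: "d0 \<in> L a3 \<inter> L a4" using meet by blast
  obtain S0 where S0: "tight S0" "c0 \<in> \<Union> (L ` S0)" "d0 \<in> \<Union> (L ` S0)" using common[OF c0 d0] by blast
  have sub12: "L a1 \<inter> L a2 \<subseteq> \<Union> (L ` S0)"
  proof
    fix c assume "c \<in> L a1 \<inter> L a2"
    then obtain S where "tight S" "c \<in> \<Union> (L ` S)" "d0 \<in> \<Union> (L ` S)" using common d0 by blast
    then show "c \<in> \<Union> (L ` S0)" using tight_unions_eq_or_disjoint[OF _ S0(1) r] S0(3) by blast
  qed
  have sub34: "L a3 \<inter> L a4 \<subseteq> \<Union> (L ` S0)"
  proof
    fix d assume "d \<in> L a3 \<inter> L a4"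
    then obtain S where "tight S" "c0 \<in> \<Union> (L ` S)" "d \<in> \<Union> (L ` S)" using common c0 by blast
    then show "d \<in> \<Union> (L ` S0)" using tight_unions_eq_or_disjoint[OF _ S0(1) r] S0(2) by blast
  qed
  show ?thesis
    using c0 d0
    by (intro colorable_if_common_colors_within_tight[OF r A few S0(1) sub12 sub34 _ _ _ _ parity])
      blast+
qed

lemma colorable_if_one_pair_meets:
  assumes A: "big_part = {a1, a2, a3, a4}" "distinct [a1, a2, a3, a4]"
    and few: "\<forall>c. card {a\<in>big_part. c \<in> L a} \<le> 2"
    and meet: "L a1 \<inter> L a2 \<noteq> {}" and disjoint: "L a3 \<inter> L a4 = {}"
  shows "colorable V p L"
proof -
  obtain c where c: "c \<in> L a1" "c \<in> L a2" using meet by blast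
  have c': "c \<notin> L a3" "c \<notin> L a4" using not_in_third_list[OF few, of a1 a2] c A by auto
  have a_V: "a3 \<in> V" "a4 \<in> V" using A(1) big_part_subset by auto
  have "2 * r + 2 \<le> card (L a3 \<union> L a4)"
    using card_UN_L_if_disjoint[of "{a3, a4}" a3 a4] a_V A(2) disjoint by simp
  moreover have "L a3 \<union> L a4 \<subseteq> \<Union> (L ` (V - {a1, a2})) - {c}" using c' a_V A(2) by auto
  then have "card (L a3 \<union> L a4) \<le> card (\<Union> (L ` (V - {a1, a2})) - {c})"
    using finite_UN_L[of "V - {a1, a2}"] by (intro card_mono) auto
  ultimately show ?thesis using colorable_if_two_share_color[OF A c c'] by linarith
qed

lemma colorable_if_two_big_lists_meet:
  assumes r: "1 \<le> r" and few: "\<forall>c. card {a\<in>big_part. c \<in> L a} \<le> 2"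
    and ab: "a \<in> big_part" "b \<in> big_part" "a \<noteq> b" "L a \<inter> L b \<noteq> {}"
    and parity: "even r \<or> (\<exists>a\<in>big_part. r + 2 \<le> card (L a))"
  shows "colorable V p L"
proof -
  have "card (big_part - {a, b}) = 2" using ab card_big_part by (simp add: card_Diff_subset)
  then obtain c d where cd: "big_part - {a, b} = {c, d}" "c \<noteq> d" by (meson card_2_iff)
  then have A: "big_part = {a, b, c, d}" "distinct [a, b, c, d]" using ab(1-3) by auto
  show ?thesis
  proof (cases "L c \<inter> L d = {}")
    case True
    then show ?thesis by (rule colorable_if_one_pair_meets[OF A few ab(4)])
  next
    case False
    then show ?thesis by (rule colorable_if_both_pairs_meet[OF r A few ab(4) _ parity])
  qed
qed

lemma colorable_if_color_in_three_big_lists: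
  assumes "1 \<le> r" "3 \<le> card {a\<in>big_part. c \<in> L a}"
  shows "colorable V p L"
proof -
  have fin: "finite big_part" using finite_subset_V[OF big_part_subset] .
  then have "card {a\<in>big_part. c \<in> L a} \<le> 4" using card_big_part card_mono[OF fin] by fastforce
  then consider "card {a\<in>big_part. c \<in> L a} = 4" | "card {a\<in>big_part. c \<in> L a} = 3"
    using assms(2) by linarith
  then show ?thesis
  proof cases
    case 1
    then have "{a\<in>big_part. c \<in> L a} = big_part"
      using card_seteq[OF fin, of "{a\<in>big_part. c \<in> L a}"] card_big_part by auto
    then have "\<forall>a\<in>big_part. c \<in> L a" by blast
    then show ?thesis by (rule colorable_if_color_common_to_big_part[OF lists])
  next
    case 2
    then show ?thesis by (rule colorable_if_color_in_exactly_three_big_lists[OF assms(1)])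
  qed
qed

theorem colorable_if_even_or_big_list:
  assumes parity: "even r \<or> (\<exists>a\<in>big_part. r + 2 \<le> card (L a))"
  shows "colorable V p L"
proof (cases "r = 0")
  case True
  then have "pair_vertices = {}"
    using card_pair_vertices finite_subset_V[OF pair_vertices_subset] by simp
  then have "\<forall>u\<in>V. \<forall>v\<in>V. p u = p v" unfolding pair_vertices_def by auto
  moreover have "\<forall>v\<in>V. L v \<noteq> {}" using card_L by fastforce
  ultimately show ?thesis by (intro colorable_if_single_part)
next
  case False
  then have r: "1 \<le> r" by simp
  show ?thesis
  proof (cases "\<exists>c. 3 \<le> card {a\<in>big_part. c \<in> L a}")
    case True
    then obtain c where "3 \<le> card {a\<in>big_part. c \<in> L a}" by blast
    then show ?thesis by (rule colorable_if_color_in_three_big_lists[OF r])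
  next
    case False
    have few: "\<forall>c. card {a\<in>big_part. c \<in> L a} \<le> 2"
    proof
      fix c
      have "\<not> 3 \<le> card {a\<in>big_part. c \<in> L a}" using False by blast
      then show "card {a\<in>big_part. c \<in> L a} \<le> 2" by linarith
    qed
    show ?thesis
    proof (cases "\<exists>a\<in>big_part. \<exists>b\<in>big_part. a \<noteq> b \<and> L a \<inter> L b \<noteq> {}")
      case True
      then obtain a b where "a \<in> big_part" "b \<in> big_part" "a \<noteq> b" "L a \<inter> L b \<noteq> {}" by blast
      then show ?thesis by (rule colorable_if_two_big_lists_meet[OF r few _ _ _ _ parity])
    next
      case False
      then have "\<forall>a\<in>big_part. \<forall>b\<in>big_part. a \<noteq> b \<longrightarrow> L a \<inter> L b = {}" by blast
      then show ?thesis by (rule colorable_if_big_part_lists_disjoint[OF r])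
    qed
  qed
qed

end

context big_part_and_pairs
begin

definition common_color :: "('v \<Rightarrow> 'c set) \<Rightarrow> nat \<Rightarrow> 'c \<Rightarrow> bool" where
  "common_color L i c \<longleftrightarrow> i \<in> p ` V - {0} \<and> (\<forall>v\<in>V. p v = i \<longrightarrow> c \<in> L v)"

lemma common_color_iff:
  assumes "u \<in> V" "v \<in> V" "u \<noteq> v" "p u = p v" "p u \<noteq> 0"
  shows "common_color L (p u) c \<longleftrightarrow> c \<in> L u \<inter> L v"
proof
  assume "common_color L (p u) c"
  then show "c \<in> L u \<inter> L v" using assms unfolding common_color_def by auto
next
  assume c: "c \<in> L u \<inter> L v"
  have "c \<in> L w" if "w \<in> V" "p w = p u" for w
  proof -
    have "w \<in> {u, v}" using pair_part_eq[OF assms] that by blast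
    then show ?thesis using c by blast
  qed
  then show "common_color L (p u) c" using assms unfolding common_color_def by auto
qed

lemma common_color_cases:
  obtains (two) i j c d where "common_color L i c" "common_color L j d" "i \<noteq> j" "c \<noteq> d"
    | (none) "\<forall>i c. \<not> common_color L i c"
    | (one) i e where "common_color L i e" "\<forall>j d. j \<noteq> i \<longrightarrow> common_color L j d \<longrightarrow> d = e"
proof (cases "\<forall>i c. \<not> common_color L i c")
  case False
  then obtain i e where ie: "common_color L i e" by blast
  show thesis
  proof (cases "\<forall>j d. j \<noteq> i \<longrightarrow> common_color L j d \<longrightarrow> d = e")
    case False
    then obtain j d where "common_color L j d" "i \<noteq> j" "e \<noteq> d" by blast
    then show thesis using two[OF ie] by blast
  qed (use one ie in blast)
qed (use none in blast)

lemma remove_two_common_color_parts: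
  assumes "common_color L i c" "common_color L j d" "i \<noteq> j" "c \<noteq> d"
    and lists: "\<forall>v\<in>V. finite (L v) \<and> r + 1 \<le> card (L v)"
  shows "2 \<le> r" "big_part_and_pairs {v\<in>V. p v \<notin> {i, j}} p (r - 2)"
    and "\<forall>v\<in>{v\<in>V. p v \<notin> {i, j}}. finite (L v - {c, d}) \<and> r - 1 \<le> card (L v - {c, d})"
proof -
  have ij: "{i, j} \<subseteq> p ` V - {0}" using assms(1,2) unfolding common_color_def by blast
  have card_ij: "card {i, j} = 2" using assms(3) by simp
  then show "2 \<le> r" using card_mono[OF _ ij] finite_V card_pair_parts by simp
  show "big_part_and_pairs {v\<in>V. p v \<notin> {i, j}} p (r - 2)"
    using remove_pair_parts[OF ij] card_ij by simp
  show "\<forall>v\<in>{v\<in>V. p v \<notin> {i, j}}. finite (L v - {c, d}) \<and> r - 1 \<le> card (L v - {c, d})"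
  proof
    fix v assume "v \<in> {v\<in>V. p v \<notin> {i, j}}"
    then have "finite (L v)" "r + 1 \<le> card (L v)" using lists by auto
    moreover have "card (L v) - 2 \<le> card (L v - {c, d})"
      using diff_card_le_card_Diff[of "{c, d}" "L v"] assms(4) by simp
    ultimately show "finite (L v - {c, d}) \<and> r - 1 \<le> card (L v - {c, d})" by simp
  qed
qed

lemma pair_lists_disjoint_if_no_common_color:
  assumes "\<forall>i c. \<not> common_color L i c"
  shows "\<forall>u\<in>V. \<forall>v\<in>V. u \<noteq> v \<longrightarrow> p u = p v \<longrightarrow> p u \<noteq> 0 \<longrightarrow> L u \<inter> L v = {}"
proof (intro ballI impI)
  fix u v assume uv: "u \<in> V" "v \<in> V" "u \<noteq> v" "p u = p v" "p u \<noteq> 0"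
  show "L u \<inter> L v = {}"
  proof (rule ccontr)
    assume "L u \<inter> L v \<noteq> {}"
    then obtain c where "c \<in> L u \<inter> L v" by blast
    then have "common_color L (p u) c" using common_color_iff[OF uv, of L c] by blast
    then show False using assms by blast
  qed
qed

lemma colorable_if_two_common_colors:
  assumes "common_color L i c" "common_color L j d" "i \<noteq> j" "c \<noteq> d"
    and "colorable {v\<in>V. p v \<notin> {i, j}} p (\<lambda>v. L v - {c, d})"
  shows "colorable V p L"
proof (rule colorable_extend[OF assms(5), where g = "\<lambda>v. if p v = i then c else d"])
  show "\<forall>v\<in>V - {v\<in>V. p v \<notin> {i, j}}. (if p v = i then c else d) \<in> L v \<inter> {c, d}"
    using assms(1,2) unfolding common_color_def by auto
  show "\<forall>u\<in>V - {v\<in>V. p v \<notin> {i, j}}. \<forall>w\<in>V - {v\<in>V. p v \<notin> {i, j}}.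
      p u \<noteq> p w \<longrightarrow> (if p u = i then c else d) \<noteq> (if p w = i then c else d)"
    using assms(4) by auto
qed blast

lemma colorable_if_one_common_color:
  assumes lists: "\<forall>v\<in>V. finite (L v) \<and> r + 1 \<le> card (L v)"
    and e: "common_color L i e" "\<forall>j d. j \<noteq> i \<longrightarrow> common_color L j d \<longrightarrow> d = e"
    and a: "a \<in> big_part" "e \<notin> L a"
  shows "colorable V p L"
proof -
  define V' where "V' = {w\<in>V. p w \<notin> {i}}"
  have i: "i \<in> p ` V - {0}" using e(1) unfolding common_color_def by blast
  then have "0 < card (p ` V - {0})" using finite_V by (subst card_gt_0_iff) auto
  then have "1 \<le> r" using card_pair_parts by simp
  interpret V': big_part_and_pairs V' p "r - 1"
    using remove_pair_parts[of "{i}"] i unfolding V'_def by simp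
  interpret V': disjoint_pair_lists V' p "r - 1" "\<lambda>w. L w - {e}"
  proof
    show "\<forall>w\<in>V'. finite (L w - {e}) \<and> r - 1 + 1 \<le> card (L w - {e})"
    proof
      fix w assume "w \<in> V'"
      then have "finite (L w)" "r + 1 \<le> card (L w)" using lists unfolding V'_def by auto
      then show "finite (L w - {e}) \<and> r - 1 + 1 \<le> card (L w - {e})"
        using diff_card_le_card_Diff[of "{e}" "L w"] \<open>1 \<le> r\<close> by simp
    qed
    show "\<forall>x\<in>V'. \<forall>y\<in>V'. x \<noteq> y \<longrightarrow> p x = p y \<longrightarrow> p x \<noteq> 0 \<longrightarrow> (L x - {e}) \<inter> (L y - {e}) = {}"
    proof (intro ballI impI)
      fix x y assume xy: "x \<in> V'" "y \<in> V'" "x \<noteq> y" "p x = p y" "p x \<noteq> 0"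
      then have "x \<in> V" "y \<in> V" "p x \<noteq> i" unfolding V'_def by auto
      have "d = e" if "d \<in> L x \<inter> L y" for d
      proof -
        have "common_color L (p x) d"
          using common_color_iff[OF \<open>x \<in> V\<close> \<open>y \<in> V\<close> xy(3-5), of L d] that by blast
        then show ?thesis using e(2) \<open>p x \<noteq> i\<close> by blast
      qed
      then show "(L x - {e}) \<inter> (L y - {e}) = {}" by blast
    qed
  qed
  have "V'.big_part = big_part"
    using i unfolding V'.big_part_def big_part_def unfolding V'_def by auto
  then have "a \<in> V'.big_part" "L a - {e} = L a" using a by auto
  moreover have "r + 1 \<le> card (L a)" using lists a(1) big_part_subset by auto
  ultimately have "\<exists>b\<in>V'.big_part. r - 1 + 2 \<le> card (L b - {e})" using \<open>1 \<le> r\<close> by force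
  then have col: "colorable V' p (\<lambda>w. L w - {e})" by (intro V'.colorable_if_even_or_big_list) blast
  have sub: "V' \<subseteq> V" unfolding V'_def by blast
  have "\<forall>w\<in>V - V'. p w = i" "\<forall>w\<in>V - V'. e \<in> L w"
    using e(1) unfolding V'_def common_color_def by auto
  then show ?thesis by (intro colorable_extend_one_color[OF col sub]) auto
qed

end

theorem colorable_if_even_number_of_pair_parts:
  assumes "big_part_and_pairs V p (2 * m)" "\<forall>v\<in>V. finite (L v) \<and> 2 * m + 1 \<le> card (L v)"
  shows "colorable V p L"
  using assms
proof (induction m arbitrary: V L rule: less_induct)
  case (less m)
  interpret big_part_and_pairs V p "2 * m" by (rule less.prems(1))
  note lists = less.prems(2)
  show ?case
  proof (cases L rule: common_color_cases)
    case (two i j c d)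
    note removed = remove_two_common_color_parts[OF two lists]
    have "colorable {v\<in>V. p v \<notin> {i, j}} p (\<lambda>v. L v - {c, d})"
    proof (rule less.IH[of "m - 1"])
      show "m - 1 < m" using removed(1) by simp
      show "big_part_and_pairs {v\<in>V. p v \<notin> {i, j}} p (2 * (m - 1))"
        using removed(2) by (simp add: right_diff_distrib')
      have "2 * (m - 1) + 1 = 2 * m - 1" using removed(1) by simp
      then show "\<forall>v\<in>{v\<in>V. p v \<notin> {i, j}}.
          finite (L v - {c, d}) \<and> 2 * (m - 1) + 1 \<le> card (L v - {c, d})"
        using removed(3) by simp
    qed
    then show ?thesis by (rule colorable_if_two_common_colors[OF two])
  next
    case none
    interpret disjoint_pair_lists V p "2 * m" L
      using lists pair_lists_disjoint_if_no_common_color[OF none] by unfold_locales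
    show ?thesis by (rule colorable_if_even_or_big_list) simp
  next
    case (one i e)
    show ?thesis
    proof (cases "\<forall>a\<in>big_part. e \<in> L a")
      case True
      then show ?thesis by (rule colorable_if_color_common_to_big_part[OF lists])
    next
      case False
      then obtain a where "a \<in> big_part" "e \<notin> L a" by blast
      then show ?thesis by (rule colorable_if_one_common_color[OF lists one])
    qed
  qed
qed

lemma K422_big_part_and_pairs:
  assumes "1 \<le> k"
  shows "big_part_and_pairs (K422_V k) fst (k - 1)"
proof
  have "K422_V k \<subseteq> {0..<k} \<times> {0..<4}" unfolding K422_V_def by (auto split: if_splits)
  then show "finite (K422_V k)" by (rule finite_subset) simp
  have "{v\<in>K422_V k. fst v = 0} = {0} \<times> {0..<4}" using assms unfolding K422_V_def by auto
  then show "card {v\<in>K422_V k. fst v = 0} = 4" by simp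
  have "{v\<in>K422_V k. fst v = i} = {i} \<times> {0..<2}" if "i \<in> {1..<k}" for i
    using that unfolding K422_V_def by auto
  moreover have parts: "fst ` K422_V k - {0} = {1..<k}"
  proof
    show "fst ` K422_V k - {0} \<subseteq> {1..<k}" unfolding K422_V_def by auto
    show "{1..<k} \<subseteq> fst ` K422_V k - {0}"
    proof
      fix i assume i: "i \<in> {1..<k}"
      then have "(i, 0) \<in> K422_V k" unfolding K422_V_def by simp
      then show "i \<in> fst ` K422_V k - {0}" using i by force
    qed
  qed
  ultimately show "\<forall>i\<in>fst ` K422_V k - {0}. card {v\<in>K422_V k. fst v = i} = 2" by simp
  show "card (fst ` K422_V k - {0}) = k - 1" unfolding parts by simp
qed

lemma proper_L_coloring_K422_iff:
  "(\<exists>\<psi>. proper_L_coloring (K422_V k) K422_E L \<psi>) \<longleftrightarrow> colorable (K422_V k) fst L"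
  unfolding proper_L_coloring_def colorable_def K422_E_def by simp

lemma colorable_K422:
  assumes "2 \<le> k" "\<forall>v\<in>K422_V k. finite (L v) \<and> 2 * (k div 2) + 1 \<le> card (L v)"
  shows "colorable (K422_V k) fst L"
proof -
  interpret big_part_and_pairs "K422_V k" fst "k - 1"
    using K422_big_part_and_pairs assms(1) by simp
  show ?thesis
  proof (cases "even k")
    case True
    then show ?thesis using assms(1,2) colorable_if_lists_ge by simp
  next
    case False
    then have "big_part_and_pairs (K422_V k) fst (2 * (k div 2))"
      using big_part_and_pairs_axioms by (simp add: odd_two_times_div_two_nat)
    then show ?thesis using colorable_if_even_number_of_pair_parts assms(2) by blast
  qed
qed

section \<open>The lower bound construction\<close>

lemma indep_number_ge:
  assumes "finite U" "T \<subseteq> U" "\<forall>u\<in>T. \<forall>v\<in>T. \<not> F u v"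
  shows "card T \<le> indep_number U F"
proof -
  have "T \<in> {S. S \<subseteq> U \<and> independent_set S F}"
    using assms(2,3) unfolding independent_set_def by blast
  moreover have "finite {S. S \<subseteq> U \<and> independent_set S F}" using assms(1) by simp
  ultimately show ?thesis unfolding indep_number_def by (intro Max_ge) auto
qed

(* For every colour, the vertices of the part it is charged to form an independent set. *)
lemma sum_charged_colors_le_sum_indep_number:
  fixes part :: "'v \<Rightarrow> 'p" and q :: "'c \<Rightarrow> 'p"
  assumes "finite W" "\<forall>v\<in>W. finite (L v)" "\<forall>u v. F u v \<longrightarrow> part u \<noteq> part v"
  shows "(\<Sum>v\<in>W. card {\<sigma>\<in>L v. q \<sigma> = part v})
    \<le> (\<Sum>\<sigma>\<in>\<Union> (L ` W). indep_number {v\<in>W. \<sigma> \<in> L v} F)"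
proof -
  define U where "U = \<Union> (L ` W)"
  have "finite U" unfolding U_def using assms(1,2) by blast
  have "(\<Sum>v\<in>W. card {\<sigma>\<in>L v. q \<sigma> = part v}) = (\<Sum>v\<in>W. \<Sum>\<sigma>\<in>U. if \<sigma> \<in> L v \<and> q \<sigma> = part v then 1 else 0)"
  proof (rule sum.cong)
    fix v assume "v \<in> W"
    then have "{\<sigma>\<in>L v. q \<sigma> = part v} = {\<sigma>\<in>U. \<sigma> \<in> L v \<and> q \<sigma> = part v}" unfolding U_def by blast
    then show "card {\<sigma>\<in>L v. q \<sigma> = part v} = (\<Sum>\<sigma>\<in>U. if \<sigma> \<in> L v \<and> q \<sigma> = part v then 1 else 0)"
      using \<open>finite U\<close> by (simp add: sum.inter_filter[symmetric])
  qed simp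
  also have "\<dots> = (\<Sum>\<sigma>\<in>U. \<Sum>v\<in>W. if \<sigma> \<in> L v \<and> q \<sigma> = part v then 1 else 0)" by (rule sum.swap)
  also have "\<dots> = (\<Sum>\<sigma>\<in>U. card {v\<in>W. \<sigma> \<in> L v \<and> part v = q \<sigma>})"
    using assms(1) by (intro sum.cong) (auto simp: sum.inter_filter[symmetric] eq_commute)
  also have "\<dots> \<le> (\<Sum>\<sigma>\<in>U. indep_number {v\<in>W. \<sigma> \<in> L v} F)"
    using assms(1) by (intro sum_mono indep_number_ge) (auto dest: assms(3)[rule_format])
  finally show ?thesis unfolding U_def .
qed

lemma hall_condition_if_charging:
  fixes part :: "'v \<Rightarrow> 'p" and L :: "'v \<Rightarrow> 'c set"
  assumes "finite V" "\<forall>v\<in>V. finite (L v)" "\<forall>u v. E u v \<longrightarrow> part u \<noteq> part v"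
    and charging: "\<And>W. W \<subseteq> V \<Longrightarrow> \<exists>q. card W \<le> (\<Sum>v\<in>W. card {\<sigma>\<in>L v. q \<sigma> = part v})"
  shows "hall_condition V E L"
  unfolding hall_condition_def
proof (intro allI impI)
  fix W F assume "is_subgraph W F V E"
  then have W: "W \<subseteq> V" and F: "\<forall>u v. F u v \<longrightarrow> part u \<noteq> part v"
    using assms(3) unfolding is_subgraph_def by blast+
  obtain q where "card W \<le> (\<Sum>v\<in>W. card {\<sigma>\<in>L v. q \<sigma> = part v})" using charging[OF W] by blast
  also have "\<dots> \<le> (\<Sum>\<sigma>\<in>\<Union> (L ` W). indep_number {v\<in>W. \<sigma> \<in> L v} F)"
    using W assms(1,2) finite_subset F by (intro sum_charged_colors_le_sum_indep_number) auto
  finally show "card W \<le> (\<Sum>\<sigma>\<in>\<Union> (L ` W). indep_number {v\<in>W. \<sigma> \<in> L v} F)" .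
qed

definition bad_lists :: "nat \<Rightarrow> nat \<times> nat \<Rightarrow> nat set" where
  "bad_lists m v =
    (if fst v = 0 then (if snd v < 2 then {0..<m} else {m..<2*m}) \<union>
                       (if even (snd v) then {2*m..<3*m} else {3*m..<4*m})
     else if fst v < 2 * m then (if snd v = 0 then {0..<2*m} else {2*m..<4*m})
     else (if snd v = 0 then {4*m..<6*m} else {6*m..<8*m}))"

lemma finite_bad_lists: "finite (bad_lists m v)"
  unfolding bad_lists_def by auto

lemma card_bad_lists: "card (bad_lists m v) = 2 * m"
proof -
  have "card ((if snd v < 2 then {0..<m} else {m..<2*m}) \<union>
      (if even (snd v) then {2*m..<3*m} else {3*m..<4*m})) = 2 * m"
    by (subst card_Un_disjoint) auto
  then show ?thesis unfolding bad_lists_def by auto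
qed

lemma Diff_image_eq_singleton:
  assumes "finite B" "inj_on f A" "f ` A \<subseteq> B" "card B = card A + 1"
  obtains x where "B - f ` A = {x}"
proof -
  have "card (B - f ` A) = 1"
    using assms card_image[OF assms(2)] by (simp add: card_Diff_subset finite_subset)
  then show ?thesis using that card_1_singletonE by blast
qed

lemma big_part_colors_if_coloring_bad_lists:
  assumes "1 \<le> m" "k = 2 * m \<or> k = 2 * m + 1"
    and \<psi>: "\<forall>v\<in>K422_V k. \<psi> v \<in> bad_lists m v"
      "\<forall>u\<in>K422_V k. \<forall>v\<in>K422_V k. fst u \<noteq> fst v \<longrightarrow> \<psi> u \<noteq> \<psi> v"
  obtains rx ry where "rx \<in> {0..<2*m}" "ry \<in> {2*m..<4*m}" "\<forall>j<4. \<psi> (0, j) \<in> {rx, ry}"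
proof -
  have in_V: "(i, t) \<in> K422_V k" if "i < 2 * m" "t < 2" for i t
    using that assms(2) unfolding K422_V_def by auto
  have in_V0: "(0, j) \<in> K422_V k" if "j < 4" for j
    using that assms(1,2) unfolding K422_V_def by auto
  have leftover: "\<exists>r. {2*m*t..<2*m*(t+1)} - (\<lambda>i. \<psi> (i, t)) ` {1..<2*m} = {r}" if "t < 2" for t
  proof -
    have "inj_on (\<lambda>i. \<psi> (i, t)) {1..<2*m}"
      using \<psi>(2) in_V that by (intro inj_onI) (metis atLeastLessThan_iff fst_conv)
    moreover have "(\<lambda>i. \<psi> (i, t)) ` {1..<2*m} \<subseteq> {2*m*t..<2*m*(t+1)}"
      using \<psi>(1) in_V that unfolding bad_lists_def by (fastforce simp: less_2_cases_iff)
    moreover have "card {2*m*t..<2*m*(t+1)} = card {1..<2*m} + 1" using assms(1) by simp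
    ultimately show ?thesis by (meson Diff_image_eq_singleton finite_atLeastLessThan)
  qed
  obtain rx ry where
    rx: "{0..<2*m} - (\<lambda>i. \<psi> (i, 0)) ` {1..<2*m} = {rx}" and
    ry: "{2*m..<4*m} - (\<lambda>i. \<psi> (i, 1)) ` {1..<2*m} = {ry}"
    using leftover[of 0] leftover[of 1] by auto
  have "\<psi> (0, j) \<in> {rx, ry}" if "j < 4" for j
  proof -
    have not_in: "\<psi> (0, j) \<notin> (\<lambda>i. \<psi> (i, t)) ` {1..<2*m}" if "t < 2" for t
    proof
      assume "\<psi> (0, j) \<in> (\<lambda>i. \<psi> (i, t)) ` {1..<2*m}"
      then obtain i where "i \<in> {1..<2*m}" "\<psi> (0, j) = \<psi> (i, t)" by blast
      then show False using \<psi>(2) in_V0[OF \<open>j < 4\<close>] in_V[of i t] that by auto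
    qed
    have "\<psi> (0, j) \<in> bad_lists m (0, j)" using \<psi>(1) in_V0[OF that] by blast
    then have "\<psi> (0, j) < 4 * m" unfolding bad_lists_def by (auto split: if_splits)
    then have "\<psi> (0, j) \<in> {0..<2*m} - (\<lambda>i. \<psi> (i, 0)) ` {1..<2*m} \<or>
        \<psi> (0, j) \<in> {2*m..<4*m} - (\<lambda>i. \<psi> (i, 1)) ` {1..<2*m}"
      using not_in[of 0] not_in[of 1] by auto
    then show ?thesis unfolding rx ry by blast
  qed
  moreover have "rx \<in> {0..<2*m}" "ry \<in> {2*m..<4*m}" using rx ry by blast+
  ultimately show ?thesis using that by blast
qed

lemma not_colorable_bad_lists:
  assumes "1 \<le> m" "k = 2 * m \<or> k = 2 * m + 1"
  shows "\<not> colorable (K422_V k) fst (bad_lists m)"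
proof
  assume "colorable (K422_V k) fst (bad_lists m)"
  then obtain \<psi> where \<psi>: "\<forall>v\<in>K422_V k. \<psi> v \<in> bad_lists m v"
    "\<forall>u\<in>K422_V k. \<forall>v\<in>K422_V k. fst u \<noteq> fst v \<longrightarrow> \<psi> u \<noteq> \<psi> v"
    unfolding colorable_def by blast
  obtain rx ry where r: "rx \<in> {0..<2*m}" "ry \<in> {2*m..<4*m}" "\<forall>j<4. \<psi> (0, j) \<in> {rx, ry}"
    using big_part_colors_if_coloring_bad_lists[OF assms \<psi>] by blast
  define j where "j = (if rx < m then 2 else 0) + (if ry < 3 * m then 1 else (0::nat))"
  have "j < 4" unfolding j_def by simp
  then have "(0, j) \<in> K422_V k" using assms unfolding K422_V_def by auto
  moreover have "rx \<notin> bad_lists m (0, j)" "ry \<notin> bad_lists m (0, j)"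
    using r(1,2) unfolding bad_lists_def j_def by auto
  ultimately show False using r(3) \<psi>(1) \<open>j < 4\<close> by blast
qed

lemma card_le_sum_if_compensated:
  fixes c :: "'a \<Rightarrow> nat"
  assumes "finite W" "a \<in> W" "2 \<le> c a" "\<forall>v\<in>W - {a, b}. 1 \<le> c v"
  shows "card W \<le> (\<Sum>v\<in>W. c v)"
proof -
  have "card W \<le> card ((W - {a, b}) \<union> {a, b})" using assms(1) by (intro card_mono) auto
  also have "\<dots> \<le> card (W - {a, b}) + card {a, b}" by (rule card_Un_le)
  also have "card {a, b} \<le> 2" by (cases "a = b") auto
  moreover have "card (W - {a, b}) \<le> (\<Sum>v\<in>W - {a, b}. c v)"
    using assms(4) sum_mono[of "W - {a, b}" "\<lambda>_. 1" c] by simp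
  ultimately have "card W \<le> (\<Sum>v\<in>W - {a, b}. c v) + 2" by linarith
  also have "\<dots> \<le> (\<Sum>v\<in>W - {a}. c v) + c a"
    using assms(1,3) by (intro add_mono sum_mono2) auto
  also have "\<dots> = (\<Sum>v\<in>W. c v)" using assms(1,2) by (simp add: sum.remove)
  finally show ?thesis .
qed

(* Given a big-part vertex (0, js) in the subgraph, the colours big_color_X and big_color_Y of
   its list are charged to the big part and the remaining colours of each block, in increasing
   order, to parts 1, ..., 2m - 1; only (0, 3 - js) may receive no colour of its own list. *)
definition big_color_X :: "nat \<Rightarrow> nat \<Rightarrow> nat" where
  "big_color_X m js = (if js < 2 then 0 else 2 * m - 1)"

definition big_color_Y :: "nat \<Rightarrow> nat \<Rightarrow> nat" where
  "big_color_Y m js = (if even js then 2 * m else 4 * m - 1)"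

definition bad_charge :: "nat \<Rightarrow> nat \<Rightarrow> nat \<Rightarrow> nat" where
  "bad_charge m js \<sigma> =
    (if \<sigma> = big_color_X m js \<or> \<sigma> = big_color_Y m js then 0
     else if \<sigma> < 2 * m then (if js < 2 then \<sigma> else \<sigma> + 1)
     else if \<sigma> < 4 * m then (if even js then \<sigma> - 2 * m else \<sigma> - 2 * m + 1)
     else 2 * m)"

definition charged :: "nat \<Rightarrow> nat \<Rightarrow> nat \<times> nat \<Rightarrow> nat" where
  "charged m js v = card {\<sigma>\<in>bad_lists m v. bad_charge m js \<sigma> = fst v}"

lemma one_le_charged:
  assumes "\<sigma> \<in> bad_lists m v" "bad_charge m js \<sigma> = fst v"
  shows "1 \<le> charged m js v"
proof -
  have "{\<sigma>\<in>bad_lists m v. bad_charge m js \<sigma> = fst v} \<noteq> {}" using assms by blast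
  then show ?thesis unfolding charged_def using finite_bad_lists
    by (simp add: Suc_leI card_gt_0_iff)
qed

lemma one_le_charged_pair_vertex:
  assumes "1 \<le> m" "k \<le> 2 * m + 1" "(i, t) \<in> K422_V k" "i \<noteq> 0"
  shows "1 \<le> charged m js (i, t)"
proof -
  have "i < k" "t < 2" using assms(3,4) unfolding K422_V_def by auto
  then consider "i < 2 * m" "t = 0" | "i < 2 * m" "t = 1" | "i = 2 * m" using assms(2) by linarith
  then have "\<exists>\<sigma>\<in>bad_lists m (i, t). bad_charge m js \<sigma> = i"
  proof cases
    case 1
    define \<sigma> where "\<sigma> = (if js < 2 then i else i - 1)"
    have "\<sigma> \<in> bad_lists m (i, t)" "bad_charge m js \<sigma> = i"
      using 1 assms(4) unfolding \<sigma>_def bad_lists_def bad_charge_def big_color_X_def big_color_Y_def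
      by auto
    then show ?thesis by blast
  next
    case 2
    define \<sigma> where "\<sigma> = 2 * m + (if even js then i else i - 1)"
    have "\<sigma> \<in> bad_lists m (i, t)" "bad_charge m js \<sigma> = i"
      using 2 assms(4) unfolding \<sigma>_def bad_lists_def bad_charge_def big_color_X_def big_color_Y_def
      by auto
    then show ?thesis by blast
  next
    case 3
    have "4 * m + 2 * m * t \<in> bad_lists m (i, t)" "bad_charge m js (4 * m + 2 * m * t) = i"
      using 3 \<open>t < 2\<close> assms(1)
      unfolding bad_lists_def bad_charge_def big_color_X_def big_color_Y_def
      by (auto simp: less_2_cases_iff)
    then show ?thesis by blast
  qed
  then show ?thesis using one_le_charged by fastforce
qed

lemma big_colors_in_bad_lists:
  assumes "1 \<le> m"
  shows "big_color_X m js \<in> bad_lists m (0, j) \<longleftrightarrow> (j < 2 \<longleftrightarrow> js < 2)"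
    and "big_color_Y m js \<in> bad_lists m (0, j) \<longleftrightarrow> (even j \<longleftrightarrow> even js)"
  using assms unfolding big_color_X_def big_color_Y_def bad_lists_def by auto

lemma two_le_charged_big_vertex: "1 \<le> m \<Longrightarrow> 2 \<le> charged m js (0, js)"
proof -
  assume "1 \<le> m"
  then have sub: "{big_color_X m js, big_color_Y m js}
      \<subseteq> {\<sigma>\<in>bad_lists m (0, js). bad_charge m js \<sigma> = 0}"
    using big_colors_in_bad_lists by (auto simp: bad_charge_def)
  have "big_color_X m js \<noteq> big_color_Y m js"
    using \<open>1 \<le> m\<close> unfolding big_color_X_def big_color_Y_def by auto
  then show ?thesis
    unfolding charged_def using card_mono[OF _ sub] finite_bad_lists by fastforce
qed

lemma one_le_charged_big_vertex:
  assumes "1 \<le> m" "j < 4" "js < 4" "j \<noteq> 3 - js"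
  shows "1 \<le> charged m js (0, j)"
proof -
  have "(j < 2 \<longleftrightarrow> js < 2) \<or> (even j \<longleftrightarrow> even js)"
    using assms(2-4) by presburger
  then have "big_color_X m js \<in> bad_lists m (0, j) \<or> big_color_Y m js \<in> bad_lists m (0, j)"
    using big_colors_in_bad_lists[OF assms(1)] by blast
  moreover have "bad_charge m js (big_color_X m js) = 0" "bad_charge m js (big_color_Y m js) = 0"
    unfolding bad_charge_def by simp_all
  ultimately show ?thesis using one_le_charged[of _ m "(0, j)" js] by auto
qed

lemma hall_condition_bad_lists:
  assumes "1 \<le> m" "k = 2 * m \<or> k = 2 * m + 1"
  shows "hall_condition (K422_V k) K422_E (bad_lists m)"
proof (rule hall_condition_if_charging[where part = fst])
  show "finite (K422_V k)"
    using K422_big_part_and_pairs[of k] assms big_part_and_pairs.finite_V by fastforce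
  show "\<forall>v\<in>K422_V k. finite (bad_lists m v)" by (simp add: finite_bad_lists)
  show "\<forall>u v. K422_E u v \<longrightarrow> fst u \<noteq> fst v" unfolding K422_E_def by blast
  fix W assume W: "W \<subseteq> K422_V k"
  have "finite W" using W \<open>finite (K422_V k)\<close> finite_subset by blast
  have pair: "1 \<le> charged m js v" if "v \<in> W" "fst v \<noteq> 0" for js v
    using one_le_charged_pair_vertex[OF assms(1), of k "fst v" "snd v"] that W assms(2) by auto
  show "\<exists>q. card W \<le> (\<Sum>v\<in>W. card {\<sigma>\<in>bad_lists m v. q \<sigma> = fst v})"
  proof (cases "\<exists>js<4. (0, js) \<in> W")
    case True
    then obtain js where js: "js < 4" "(0, js) \<in> W" by blast
    have "1 \<le> charged m js v" if "v \<in> W - {(0, js), (0, 3 - js)}" for v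
    proof (cases "fst v = 0")
      case True
      then obtain j where "v = (0, j)" by (metis prod.collapse)
      moreover from this have "j < 4" using that W unfolding K422_V_def by auto
      ultimately show ?thesis using one_le_charged_big_vertex[OF assms(1) _ js(1)] that by auto
    qed (use pair that in blast)
    then have "card W \<le> (\<Sum>v\<in>W. charged m js v)"
      using card_le_sum_if_compensated[OF \<open>finite W\<close> js(2)] two_le_charged_big_vertex[OF assms(1)]
      by blast
    then show ?thesis unfolding charged_def by blast
  next
    case False
    then have "\<forall>v\<in>W. fst v \<noteq> 0" using W unfolding K422_V_def by fastforce
    then have "(\<Sum>v\<in>W. 1) \<le> (\<Sum>v\<in>W. charged m 0 v)" using pair by (intro sum_mono) blast
    then have "card W \<le> (\<Sum>v\<in>W. charged m 0 v)" by simp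
    then show ?thesis unfolding charged_def by blast
  qed
qed

section \<open>The Hall number\<close>

lemma hall_number_eqI:
  fixes V :: "'v set" and bad :: "'v \<Rightarrow> nat set"
  assumes "0 < n"
    and upper: "\<And>L :: 'v \<Rightarrow> nat set. \<forall>v\<in>V. finite (L v) \<and> n \<le> card (L v) \<Longrightarrow>
      hall_condition V E L \<Longrightarrow> \<exists>\<psi>. proper_L_coloring V E L \<psi>"
    and lower: "\<forall>v\<in>V. finite (bad v) \<and> n - 1 \<le> card (bad v)" "hall_condition V E bad"
      "\<nexists>\<psi>. proper_L_coloring V E bad \<psi>"
  shows "hall_number V E = n"
  unfolding hall_number_def
proof (rule Least_equality)
  show "0 < n \<and> (\<forall>L :: 'v \<Rightarrow> nat set. (\<forall>v\<in>V. finite (L v) \<and> n \<le> card (L v)) \<and>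
      hall_condition V E L \<longrightarrow> (\<exists>\<psi>. proper_L_coloring V E L \<psi>))"
    using assms(1) upper by blast
  fix j assume "0 < j \<and> (\<forall>L :: 'v \<Rightarrow> nat set. (\<forall>v\<in>V. finite (L v) \<and> j \<le> card (L v)) \<and>
      hall_condition V E L \<longrightarrow> (\<exists>\<psi>. proper_L_coloring V E L \<psi>))"
  then have "\<not> (\<forall>v\<in>V. finite (bad v) \<and> j \<le> card (bad v))" using lower(2,3) by blast
  then show "n \<le> j" using lower(1) by fastforce
qed

theorem theorem4:
  fixes k :: nat
  assumes "2 \<le> k"
  shows "hall_number (K422_V k) K422_E = (if odd k then k else k + 1)"
proof -
  define m where "m = k div 2"
  have m: "1 \<le> m" "k = 2 * m \<or> k = 2 * m + 1" using assms unfolding m_def by auto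
  have "hall_number (K422_V k) K422_E = 2 * m + 1"
  proof (rule hall_number_eqI[where bad = "bad_lists m"])
    fix L :: "nat \<times> nat \<Rightarrow> nat set"
    assume "\<forall>v\<in>K422_V k. finite (L v) \<and> 2 * m + 1 \<le> card (L v)"
    then show "\<exists>\<psi>. proper_L_coloring (K422_V k) K422_E L \<psi>"
      using colorable_K422[OF assms] proper_L_coloring_K422_iff unfolding m_def by blast
  next
    show "\<forall>v\<in>K422_V k. finite (bad_lists m v) \<and> 2 * m + 1 - 1 \<le> card (bad_lists m v)"
      by (simp add: finite_bad_lists card_bad_lists)
    show "hall_condition (K422_V k) K422_E (bad_lists m)" using hall_condition_bad_lists m by blast
    show "\<nexists>\<psi>. proper_L_coloring (K422_V k) K422_E (bad_lists m) \<psi>"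
      using not_colorable_bad_lists m proper_L_coloring_K422_iff by blast
  qed simp
  then show ?thesis using m(2) by auto
qed

end
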